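(* If $G$ is a $(3,2)$-critical graph that contains at least three odd cycles, then $G$ contains as a subgraph a subdivision of one of the multigraphs $K_2^{(4)}$, $K_4$, $K_3^{(2,2,1)}$, or $C_4^{(2,1,2,1)}$. Moreover, each such subdivision (arising in this way) contains at least two odd cycles.
   Context: All graphs are finite and simple. An odd cycle is a cycle (subgraph) of odd length. For a graph $G$, ${\rm es}_{\chi}(G)$ is the minimum number of edges of $G$ whose removal results in a spanning subgraph $G_1$ with $\chi(G_1)=\chi(G)-1$. $G$ is edge-stability critical if ${\rm es}_{\chi}(G-e)<{\rm es}_{\chi}(G)$ for every edge $e$. $G$ is $(3,2)$-critical if it is edge-stability critical with $\chi(G)=3$ and ${\rm es}_{\chi}(G)=2$. $K_2^{(4)}$ is the multigraph on two vertices joined by four parallel edges; $K_3^{(2,2,1)}$ is the multigraph on three vertices in which two of the pairs are joined by two parallel edges and the third pair by a single edge; $C_4^{(2,1,2,1)}$ is the multigraph obtained from the cycle $C_4$ by duplicating two of its non-consecutive edges. A subdivision of a multigraph replaces each edge by a path (of length at least $1$), the paths being internally disjoint. *)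

theory Defs
  imports Main
begin

definition simple_graph :: "'a set \<Rightarrow> 'a set set \<Rightarrow> bool" where
  "simple_graph V E \<longleftrightarrow> finite V \<and>
     (\<forall>e\<in>E. \<exists>u v. e = {u, v} \<and> u \<noteq> v \<and> u \<in> V \<and> v \<in> V)"

definition proper_colouring :: "'a set \<Rightarrow> 'a set set \<Rightarrow> ('a \<Rightarrow> nat) \<Rightarrow> nat \<Rightarrow> bool" where
  "proper_colouring V E c k \<longleftrightarrow>
     (\<forall>v\<in>V. c v < k) \<and> (\<forall>u v. {u, v} \<in> E \<longrightarrow> c u \<noteq> c v)"

definition colourable :: "'a set \<Rightarrow> 'a set set \<Rightarrow> nat \<Rightarrow> bool" where
  "colourable V E k \<longleftrightarrow> (\<exists>c. proper_colouring V E c k)"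

definition chromatic_number :: "'a set \<Rightarrow> 'a set set \<Rightarrow> nat" where
  "chromatic_number V E = (LEAST k. colourable V E k)"

definition es_chi :: "'a set \<Rightarrow> 'a set set \<Rightarrow> nat" where
  "es_chi V E = (LEAST k. \<exists>F. F \<subseteq> E \<and> card F = k \<and>
       chromatic_number V (E - F) = chromatic_number V E - 1)"

definition edge_stability_critical :: "'a set \<Rightarrow> 'a set set \<Rightarrow> bool" where
  "edge_stability_critical V E \<longleftrightarrow> (\<forall>e\<in>E. es_chi V (E - {e}) < es_chi V E)"

definition critical_3_2 :: "'a set \<Rightarrow> 'a set set \<Rightarrow> bool" where
  "critical_3_2 V E \<longleftrightarrow> edge_stability_critical V E \<and>
     chromatic_number V E = 3 \<and> es_chi V E = 2"

definition is_path :: "'a set set \<Rightarrow> 'a list \<Rightarrow> bool" where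
  "is_path E xs \<longleftrightarrow> xs \<noteq> [] \<and> distinct xs \<and>
     (\<forall>i. Suc i < length xs \<longrightarrow> {xs ! i, xs ! Suc i} \<in> E)"

definition path_edges :: "'a list \<Rightarrow> 'a set set" where
  "path_edges xs = {{xs ! i, xs ! Suc i} | i. Suc i < length xs}"

definition is_cycle :: "'a set set \<Rightarrow> 'a list \<Rightarrow> bool" where
  "is_cycle E xs \<longleftrightarrow> length xs \<ge> 3 \<and> distinct xs \<and>
     (\<forall>i < length xs. {xs ! i, xs ! (Suc i mod length xs)} \<in> E)"

definition cycle_edges :: "'a list \<Rightarrow> 'a set set" where
  "cycle_edges xs = {{xs ! i, xs ! (Suc i mod length xs)} | i. i < length xs}"

text \<open>Odd cycles of G, each cycle (as a subgraph) identified with its edge set.\<close>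

definition odd_cycles :: "'a set set \<Rightarrow> 'a set set set" where
  "odd_cycles E = {cycle_edges xs | xs. is_cycle E xs \<and> odd (length xs)}"

text \<open>A loopless multigraph: number n of vertices (named 0..n-1) and a list of
  edges (parallel edges = repeated entries).\<close>

type_synonym multigraph = "nat \<times> (nat \<times> nat) list"

definition mg_K2_4 :: multigraph where
  "mg_K2_4 = (2, [(0,1), (0,1), (0,1), (0,1)])"

definition mg_K4 :: multigraph where
  "mg_K4 = (4, [(0,1), (0,2), (0,3), (1,2), (1,3), (2,3)])"

definition mg_K3_221 :: multigraph where
  "mg_K3_221 = (3, [(0,1), (0,1), (1,2), (1,2), (0,2)])"

definition mg_C4_2121 :: multigraph where
  "mg_C4_2121 = (4, [(0,1), (0,1), (1,2), (2,3), (2,3), (3,0)])"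

text \<open>f maps branch vertices of H into G, and P k is the path of G replacing the
  k-th edge of H.  Paths are internally disjoint (from each other and from the branch
  vertices), and distinct paths use distinct edges (needed so that parallel edges
  give distinct paths in the simple graph G).\<close>

definition internal :: "'a list \<Rightarrow> 'a set" where
  "internal xs = set (butlast (tl xs))"

definition is_subdivision ::
  "'a set set \<Rightarrow> multigraph \<Rightarrow> (nat \<Rightarrow> 'a) \<Rightarrow> (nat \<Rightarrow> 'a list) \<Rightarrow> bool" where
  "is_subdivision E H f P \<longleftrightarrow>
     (let n = fst H; es = snd H in
       inj_on f {..<n} \<and>
       (\<forall>k < length es.
          is_path E (P k) \<and> length (P k) \<ge> 2 \<and>
          hd (P k) = f (fst (es ! k)) \<and> last (P k) = f (snd (es ! k)) \<and>
          internal (P k) \<inter> f ` {..<n} = {}) \<and>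
       (\<forall>k < length es. \<forall>l < length es. k \<noteq> l \<longrightarrow>
          internal (P k) \<inter> set (P l) = {} \<and> path_edges (P k) \<inter> path_edges (P l) = {}))"

definition subdivision_edges :: "multigraph \<Rightarrow> (nat \<Rightarrow> 'a list) \<Rightarrow> 'a set set" where
  "subdivision_edges H P = (\<Union>k < length (snd H). path_edges (P k))"

end

theory Submission
  imports Defs
begin

text \<open>Since deleting any edge e leaves chromatic number 3 while the edge stability drops below 2,
  every edge is avoided by some odd cycle, and every edge e has a partner f such that each odd
  cycle contains e or f.  The second property rules out three pairwise edge-disjoint odd cycles,
  so two different odd cycles share an edge, and an ear of one on the other yields a theta
  graph with branches A, B, R such that A \<union> B and A \<union> R are odd cycles.  An odd cycle avoiding
  an edge of A cannot stay inside the theta graph, which is bipartite without that edge, and by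
  the second property it cannot be edge-disjoint from it either; so it provides a second ear.
  Depending on where its ends lie, the theta graph together with this ear is a subdivision of
  K2^(4), K3^(2,2,1), K4 or C4^(2,1,2,1), and it contains both odd cycles A \<union> B and A \<union> R.\<close>

section \<open>Paths\<close>

lemma path_edges_zip: "path_edges xs = (\<lambda>(u, v). {u, v}) ` set (zip xs (tl xs))"
  unfolding path_edges_def set_zip by (force simp: nth_tl)

lemma path_edges_Nil [simp]: "path_edges [] = {}"
  and path_edges_single [simp]: "path_edges [x] = {}"
  and path_edges_Cons2 [simp]: "path_edges (x # y # xs) = insert {x, y} (path_edges (y # xs))"
  by (simp_all add: path_edges_zip)

lemma path_edges_append_tl:
  assumes "xs \<noteq> []" "ys \<noteq> []" "last xs = hd ys"
  shows "path_edges (xs @ tl ys) = path_edges xs \<union> path_edges ys"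
  using assms by (induction xs rule: induct_list012) (auto simp: neq_Nil_conv)

lemma path_edges_append:
  "xs \<noteq> [] \<Longrightarrow> ys \<noteq> [] \<Longrightarrow>
   path_edges (xs @ ys) = path_edges xs \<union> insert {last xs, hd ys} (path_edges ys)"
  by (induction xs rule: induct_list012) (auto simp: neq_Nil_conv)

lemma path_edges_rev [simp]: "path_edges (rev xs) = path_edges xs"
proof (induction xs rule: induct_list012)
  case (3 x y zs)
  have "path_edges (rev (y # zs) @ tl [y, x]) = path_edges (rev (y # zs)) \<union> path_edges [y, x]"
    by (rule path_edges_append_tl) auto
  with 3 show ?case by (auto simp: insert_commute)
qed auto

lemma path_edges_take_subset: "path_edges (take k xs) \<subseteq> path_edges xs"
  and path_edges_drop_subset: "path_edges (drop k xs) \<subseteq> path_edges xs"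
  unfolding path_edges_def by force+

lemma path_edges_subset_set: "e \<in> path_edges xs \<Longrightarrow> e \<subseteq> set xs"
  unfolding path_edges_def by auto

lemma path_edges_first: "length xs \<ge> 2 \<Longrightarrow> {xs ! 0, xs ! 1} \<in> path_edges xs"
  unfolding path_edges_def by (intro CollectI exI[of _ 0]) simp

lemma is_path_iff: "is_path E xs \<longleftrightarrow> xs \<noteq> [] \<and> distinct xs \<and> path_edges xs \<subseteq> E"
  unfolding is_path_def path_edges_def by blast

lemma is_path_rev [simp]: "is_path E (rev xs) \<longleftrightarrow> is_path E xs"
  by (simp add: is_path_iff)

lemma is_path_take: "is_path E xs \<Longrightarrow> k > 0 \<Longrightarrow> is_path E (take k xs)"
  using path_edges_take_subset by (fastforce simp: is_path_iff)

lemma Cons_internal_snoc: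
  assumes "length xs \<ge> 2" shows "xs = hd xs # butlast (tl xs) @ [last xs]"
  using assms by (cases xs) (auto simp: last_tl)

lemma internal_Cons_snoc [simp]: "internal (h # M @ [l]) = set M"
  by (simp add: internal_def)

lemma internal_short: "length xs < 2 \<Longrightarrow> internal xs = {}"
  unfolding internal_def by (cases xs) auto

lemma internal_rev [simp]: "internal (rev xs) = internal xs"
proof (cases "length xs \<ge> 2")
  case True
  then obtain h M l where "xs = h # M @ [l]" using Cons_internal_snoc by blast
  then show ?thesis by simp
qed (simp add: internal_short)

lemma set_eq_ends_internal:
  "length xs \<ge> 2 \<Longrightarrow> set xs = insert (hd xs) (insert (last xs) (internal xs))"
  by (subst Cons_internal_snoc) (auto simp: internal_def)

lemma internal_subset: "internal xs \<subseteq> set xs"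
  unfolding internal_def by (cases xs) (auto dest: in_set_butlastD)

lemma internal_conv_nth: "x \<in> internal xs \<longleftrightarrow> (\<exists>i. 0 < i \<and> i < length xs - 1 \<and> x = xs ! i)"
proof -
  have nth: "butlast (tl xs) ! i = xs ! Suc i" if "i < length xs - 2" for i
    using that by (simp add: nth_butlast nth_tl)
  show ?thesis
  proof
    assume "x \<in> internal xs"
    then obtain i where "i < length xs - 2" "x = butlast (tl xs) ! i"
      unfolding internal_def in_set_conv_nth by (auto simp: numeral_2_eq_2)
    then show "\<exists>i. 0 < i \<and> i < length xs - 1 \<and> x = xs ! i"
      using nth by (intro exI[of _ "Suc i"]) auto
  next
    assume "\<exists>i. 0 < i \<and> i < length xs - 1 \<and> x = xs ! i"
    then obtain i where "0 < i" "i < length xs - 1" "x = xs ! i" by blast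
    then show "x \<in> internal xs"
      using nth[of "i - 1"] unfolding internal_def in_set_conv_nth by (intro exI[of _ "i - 1"]) auto
  qed
qed

lemma path_ends_not_internal:
  assumes "is_path E xs" "length xs \<ge> 2"
  shows "hd xs \<notin> internal xs" "last xs \<notin> internal xs" "hd xs \<noteq> last xs"
proof -
  obtain h M l where "xs = h # M @ [l]" using Cons_internal_snoc[OF assms(2)] by blast
  moreover have "distinct xs" using assms(1) by (simp add: is_path_def)
  ultimately show "hd xs \<notin> internal xs" "last xs \<notin> internal xs" "hd xs \<noteq> last xs" by auto
qed

lemma path_edge_of_ends:
  assumes "{u, v} \<in> path_edges xs" "u \<notin> internal xs" "v \<notin> internal xs"
  shows "xs = [u, v] \<or> xs = [v, u]"
proof -
  obtain i where i: "Suc i < length xs" "{u, v} = {xs ! i, xs ! Suc i}"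
    using assms(1) unfolding path_edges_def by blast
  have "xs ! i \<notin> internal xs" "xs ! Suc i \<notin> internal xs"
    using i(2) assms(2,3) by (auto simp: doubleton_eq_iff)
  then have "\<not> (0 < i \<and> i < length xs - 1)" "\<not> (0 < Suc i \<and> Suc i < length xs - 1)"
    unfolding internal_conv_nth by blast+
  then have "i = 0" "length xs = 2" using i(1) by linarith+
  then have "xs = [xs ! 0, xs ! 1]" by (simp add: list_eq_iff_nth_eq less_2_cases_iff)
  then show ?thesis using i(2) \<open>i = 0\<close> by (auto simp: doubleton_eq_iff)
qed

lemma shared_edge_single_edge_paths:
  assumes "internal X \<inter> set Y = {}" "internal Y \<inter> set X = {}"
    and "e \<in> path_edges X" "e \<in> path_edges Y"
  shows "length X = 2 \<and> length Y = 2 \<and> set X = e \<and> set Y = e"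
proof -
  obtain i where "Suc i < length X" "e = {X ! i, X ! Suc i}"
    using assms(3) unfolding path_edges_def by blast
  then obtain u v where e: "e = {u, v}" by blast
  have "e \<subseteq> set X" "e \<subseteq> set Y" using assms(3,4) by (auto dest: path_edges_subset_set)
  then have "u \<notin> internal X" "v \<notin> internal X" "u \<notin> internal Y" "v \<notin> internal Y"
    using assms(1,2) e by auto
  then have "X = [u, v] \<or> X = [v, u]" "Y = [u, v] \<or> Y = [v, u]"
    using path_edge_of_ends[of u v X] path_edge_of_ends[of u v Y] assms(3,4) e by auto
  then show ?thesis using e by auto
qed

lemma distinct_path_split_at_edge:
  assumes "distinct P" "a \<in> path_edges P"
  obtains P1 P2 where "P = P1 @ P2" "P1 \<noteq> []" "P2 \<noteq> []"
    "path_edges P - {a} \<subseteq> path_edges P1 \<union> path_edges P2"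
    "distinct P1" "distinct P2" "set P1 \<inter> set P2 = {}"
proof -
  obtain i where i: "Suc i < length P" "a = {P ! i, P ! Suc i}"
    using assms(2) unfolding path_edges_def by blast
  define P1 P2 where "P1 = take (Suc i) P" and "P2 = drop (Suc i) P"
  have "P1 \<noteq> []" "P2 \<noteq> []" "last P1 = P ! i" "hd P2 = P ! Suc i"
    unfolding P1_def P2_def using i by (auto simp: take_Suc_conv_app_nth hd_drop_conv_nth)
  moreover have "P = P1 @ P2" unfolding P1_def P2_def by simp
  ultimately have "path_edges P - {a} \<subseteq> path_edges P1 \<union> path_edges P2"
    using path_edges_append[of P1 P2] i(2) by auto
  moreover have "distinct P1" "distinct P2" "set P1 \<inter> set P2 = {}"
    using assms(1) \<open>P = P1 @ P2\<close> by (metis distinct_append)+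
  ultimately show thesis using that \<open>P = P1 @ P2\<close> \<open>P1 \<noteq> []\<close> \<open>P2 \<noteq> []\<close> by blast
qed

definition internally_disjoint :: "'a list \<Rightarrow> 'a list \<Rightarrow> bool" where
  "internally_disjoint X Y \<longleftrightarrow> internal X \<inter> internal Y = {} \<and> path_edges X \<inter> path_edges Y = {}"

lemma internally_disjoint_commute: "internally_disjoint X Y \<longleftrightarrow> internally_disjoint Y X"
  unfolding internally_disjoint_def by blast

lemma internally_disjoint_rev [simp]:
  "internally_disjoint (rev X) Y \<longleftrightarrow> internally_disjoint X Y"
  "internally_disjoint X (rev Y) \<longleftrightarrow> internally_disjoint X Y"
  unfolding internally_disjoint_def by simp_all

definition openly_disjoint :: "'a list \<Rightarrow> 'a list \<Rightarrow> bool" where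
  "openly_disjoint X Y \<longleftrightarrow>
     internal X \<inter> set Y = {} \<and> internal Y \<inter> set X = {} \<and> path_edges X \<inter> path_edges Y = {}"

lemma openly_disjoint_sym: "openly_disjoint X Y \<Longrightarrow> openly_disjoint Y X"
  and openly_disjoint_rev: "openly_disjoint X Y \<Longrightarrow> openly_disjoint (rev X) (rev Y)"
  unfolding openly_disjoint_def by auto

lemma openly_disjoint_internally_disjoint: "openly_disjoint X Y \<Longrightarrow> internally_disjoint X Y"
  unfolding openly_disjoint_def internally_disjoint_def using internal_subset[of Y] by blast

definition path_between :: "'a set set \<Rightarrow> 'a \<Rightarrow> 'a \<Rightarrow> 'a list \<Rightarrow> bool" where
  "path_between E p q X \<longleftrightarrow> is_path E X \<and> length X \<ge> 2 \<and> hd X = p \<and> last X = q"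

lemma path_between_rev: "path_between E p q X \<Longrightarrow> path_between E q p (rev X)"
  unfolding path_between_def by (auto simp: hd_rev last_rev)

lemma path_between_ends:
  assumes "path_between E p q X"
  shows "p \<in> set X" "q \<in> set X" "p \<notin> internal X" "q \<notin> internal X" "p \<noteq> q"
proof -
  have "is_path E X" "length X \<ge> 2" "hd X = p" "last X = q"
    using assms unfolding path_between_def by auto
  then show "p \<in> set X" "q \<in> set X" "p \<notin> internal X" "q \<notin> internal X" "p \<noteq> q"
    using path_ends_not_internal[of E X] by (auto simp: set_eq_ends_internal)
qed

definition path_splits :: "'a set set \<Rightarrow> 'a list \<Rightarrow> 'a \<Rightarrow> 'a list \<Rightarrow> 'a list \<Rightarrow> bool" where
  "path_splits E P v P1 P2 \<longleftrightarrow> is_path E P \<and> P = P1 @ tl P2 \<and>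
     length P1 \<ge> 2 \<and> length P2 \<ge> 2 \<and> last P1 = v \<and> hd P2 = v"

lemma path_splitsE:
  assumes "path_splits E P v P1 P2"
  obtains h M1 M2 l where "P1 = h # M1 @ [v]" "P2 = v # M2 @ [l]" "P = h # M1 @ v # M2 @ [l]"
proof -
  have P: "P = P1 @ tl P2" and "length P1 \<ge> 2" "length P2 \<ge> 2" "last P1 = v" "hd P2 = v"
    using assms unfolding path_splits_def by auto
  then obtain h M1 M2 l where "P1 = h # M1 @ [v]" "P2 = v # M2 @ [l]"
    using Cons_internal_snoc by metis
  with P show thesis using that by simp
qed

lemma path_splits_ex:
  assumes "is_path E P" "v \<in> internal P"
  obtains P1 P2 where "path_splits E P v P1 P2"
proof -
  have "length P \<ge> 2" using assms(2) internal_short by force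
  then obtain h M l where P: "P = h # M @ [l]" using Cons_internal_snoc by blast
  then obtain M1 M2 where "M = M1 @ v # M2" using assms(2) by (auto dest: split_list)
  then have "path_splits E P v (h # M1 @ [v]) (v # M2 @ [l])"
    using assms(1) P unfolding path_splits_def by simp
  then show thesis by (rule that)
qed

lemma path_splits_rev:
  assumes "path_splits E P v P1 P2" shows "path_splits E (rev P) v (rev P2) (rev P1)"
proof -
  obtain h M1 M2 l where "P1 = h # M1 @ [v]" "P2 = v # M2 @ [l]" "P = h # M1 @ v # M2 @ [l]"
    using assms by (rule path_splitsE)
  with assms show ?thesis using is_path_rev[of E P] by (auto simp: path_splits_def)
qed

lemma path_splits_facts:
  assumes "path_splits E P v P1 P2"
  shows "is_path E P1" "is_path E P2" "length P1 \<ge> 2" "length P2 \<ge> 2"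
    "hd P1 = hd P" "last P1 = v" "hd P2 = v" "last P2 = last P"
    "internal P = insert v (internal P1 \<union> internal P2)" "v \<notin> internal P1" "v \<notin> internal P2"
    "path_edges P = path_edges P1 \<union> path_edges P2" "internally_disjoint P1 P2"
proof -
  obtain h M1 M2 l where P1: "P1 = h # M1 @ [v]" and P2: "P2 = v # M2 @ [l]"
    and P: "P = h # M1 @ v # M2 @ [l]"
    using assms by (rule path_splitsE)
  have path: "is_path E P" using assms unfolding path_splits_def by blast
  then have "distinct P" by (simp add: is_path_def)
  then show "hd P1 = hd P" "last P1 = v" "hd P2 = v" "last P2 = last P"
    "length P1 \<ge> 2" "length P2 \<ge> 2" "v \<notin> internal P1" "v \<notin> internal P2"
    unfolding P1 P2 P by auto
  have disj: "internal P1 \<inter> set P2 = {}" "internal P2 \<inter> set P1 = {}"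
    using \<open>distinct P\<close> unfolding P1 P2 P by auto
  show "internal P = insert v (internal P1 \<union> internal P2)"
    unfolding P1 P2 P internal_def by (simp add: butlast_append)
  show edges: "path_edges P = path_edges P1 \<union> path_edges P2"
    using path_edges_append_tl[of P1 P2] P1 P2 P by simp
  show "is_path E P1" "is_path E P2"
    using path edges \<open>distinct P\<close> unfolding is_path_iff P1 P2 P by auto
  have "path_edges P1 \<inter> path_edges P2 = {}"
  proof (rule ccontr)
    assume "path_edges P1 \<inter> path_edges P2 \<noteq> {}"
    then have "set P1 = set P2" using shared_edge_single_edge_paths[OF disj] by blast
    then show False using \<open>distinct P\<close> unfolding P1 P2 P by auto
  qed
  then show "internally_disjoint P1 P2"
    using disj(1) internal_subset[of P2] unfolding internally_disjoint_def by blast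
qed

lemmas path_splits_internal = path_splits_facts(9)
  and path_splits_path_edges = path_splits_facts(12)
  and path_splits_internally_disjoint = path_splits_facts(13)

lemma path_splits_parts:
  assumes "path_splits E P v P1 P2"
  shows "internal P1 \<subseteq> internal P" "internal P2 \<subseteq> internal P"
    "path_edges P1 \<subseteq> path_edges P" "path_edges P2 \<subseteq> path_edges P"
proof -
  have "internal P = insert v (internal P1 \<union> internal P2)"
    "path_edges P = path_edges P1 \<union> path_edges P2"
    using path_splits_internal[OF assms] path_splits_path_edges[OF assms] by simp_all
  then show "internal P1 \<subseteq> internal P" "internal P2 \<subseteq> internal P"
    "path_edges P1 \<subseteq> path_edges P" "path_edges P2 \<subseteq> path_edges P" by auto
qed

lemma path_splits_between:
  assumes "path_between E p q P" "path_splits E P v P1 P2"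
  shows "path_between E p v P1" "path_between E v q P2"
  using assms path_splits_facts[OF assms(2)] unfolding path_between_def by auto

lemma sorted_wrt_internally_disjoint_split:
  assumes "sorted_wrt internally_disjoint (Xs @ P # Ys)" "path_splits E P v P1 P2"
  shows "sorted_wrt internally_disjoint (Xs @ P1 # P2 # Ys)"
proof -
  have "internally_disjoint P1 Q \<and> internally_disjoint P2 Q" if "internally_disjoint P Q" for Q
    using that path_splits_parts[OF assms(2)] unfolding internally_disjoint_def by blast
  then show ?thesis using assms(1) path_splits_internally_disjoint[OF assms(2)]
    by (auto simp: sorted_wrt_append internally_disjoint_commute)
qed

lemma sorted_wrt_internally_disjoint_nth:
  assumes "sorted_wrt internally_disjoint Ps" "k < length Ps" "l < length Ps" "k \<noteq> l"
  shows "internally_disjoint (Ps ! k) (Ps ! l)"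
proof (cases "k < l")
  case True
  then show ?thesis using sorted_wrt_nth_less[OF assms(1)] assms(3) by blast
next
  case False
  then have "l < k" using assms(4) by simp
  then show ?thesis
    using sorted_wrt_nth_less[OF assms(1)] assms(2) internally_disjoint_commute by blast
qed

section \<open>Cycles\<close>

lemma cycle_edges_closed_path:
  assumes "xs \<noteq> []" shows "cycle_edges xs = path_edges (xs @ [hd xs])"
proof -
  have "(xs @ [hd xs]) ! i = xs ! i" "(xs @ [hd xs]) ! Suc i = xs ! (Suc i mod length xs)"
    if "i < length xs" for i
    using that assms by (auto simp: nth_append hd_conv_nth mod_if)
  then show ?thesis unfolding cycle_edges_def path_edges_def
    by (metis (no_types, lifting) length_append_singleton not_less_eq)
qed

lemma is_cycle_iff: "is_cycle E xs \<longleftrightarrow> length xs \<ge> 3 \<and> distinct xs \<and> cycle_edges xs \<subseteq> E"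
  unfolding is_cycle_def cycle_edges_def by blast

lemma cycle_edges_subset: "is_cycle E xs \<Longrightarrow> cycle_edges xs \<subseteq> E"
  by (simp add: is_cycle_iff)

lemma cycle_edges_subset_set: "e \<in> cycle_edges xs \<Longrightarrow> e \<subseteq> set xs"
  by (cases "xs = []")
    (auto simp: cycle_edges_closed_path cycle_edges_def dest: path_edges_subset_set)

lemma is_cycle_mono: "is_cycle E' xs \<Longrightarrow> E' \<subseteq> E \<Longrightarrow> is_cycle E xs"
  and is_cycle_restrict: "is_cycle E xs \<Longrightarrow> cycle_edges xs \<subseteq> E' \<Longrightarrow> is_cycle E' xs"
  by (auto simp: is_cycle_iff)

lemma is_cycle_imp_is_path:
  assumes "is_cycle E xs" shows "is_path E xs"
proof -
  have "xs \<noteq> []" using assms by (auto simp: is_cycle_iff)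
  then show ?thesis using assms path_edges_take_subset[of "length xs" "xs @ [hd xs]"]
    by (auto simp: is_cycle_iff is_path_iff cycle_edges_closed_path)
qed

lemma cycle_rotate1: "cycle_edges (rotate1 xs) = cycle_edges xs"
proof (induction xs rule: induct_list012)
  case (3 x y zs)
  have "path_edges ((y # zs @ [x]) @ tl [x, y]) = path_edges (y # zs @ [x]) \<union> path_edges [x, y]"
    by (rule path_edges_append_tl) auto
  then show ?case by (simp add: cycle_edges_closed_path insert_commute)
qed auto

lemma cycle_rotate: "cycle_edges (rotate k xs) = cycle_edges xs"
  and is_cycle_rotate: "is_cycle E (rotate k xs) \<longleftrightarrow> is_cycle E xs"
proof -
  show edges: "cycle_edges (rotate k xs) = cycle_edges xs"
    by (induction k) (auto simp: cycle_rotate1)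
  show "is_cycle E (rotate k xs) \<longleftrightarrow> is_cycle E xs"
    unfolding is_cycle_iff edges by simp
qed

lemma cycle_rotate_to:
  assumes "is_cycle E xs" "v \<in> set xs"
  obtains ys where "is_cycle E ys" "cycle_edges ys = cycle_edges xs"
    "set ys = set xs" "length ys = length xs" "hd ys = v"
proof -
  obtain i where "i < length xs" "xs ! i = v" using assms(2) by (meson in_set_conv_nth)
  then have "hd (rotate i xs) = v" by (subst hd_rotate_conv_nth) auto
  with assms(1) show thesis by (intro that[of "rotate i xs"]) (simp_all add: cycle_rotate is_cycle_rotate)
qed

text \<open>The cycle edge with index k becomes the closing edge after rotating by k + 1.\<close>

lemma cycle_rotate_to_edge:
  assumes "is_cycle E xs" "e \<in> cycle_edges xs"
  obtains ys where "is_cycle E ys" "cycle_edges ys = cycle_edges xs"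
    "set ys = set xs" "length ys = length xs" "e = {last ys, hd ys}"
proof -
  define n where "n = length xs"
  obtain k where k: "k < n" "e = {xs ! k, xs ! (Suc k mod n)}"
    using assms(2) unfolding cycle_edges_def n_def by blast
  define ys where "ys = rotate (Suc k) xs"
  have ys: "length ys = n" "ys \<noteq> []" unfolding ys_def n_def using k(1) n_def by auto
  have nth: "ys ! i = xs ! ((Suc k + i) mod n)" if "i < n" for i
    unfolding ys_def n_def by (rule nth_rotate) (use that n_def in simp)
  have "(Suc k + (n - 1)) mod n = k" using k by (simp add: mod_if)
  then have "last ys = xs ! k" using nth[of "n - 1"] ys k(1) by (simp add: last_conv_nth)
  moreover have "hd ys = xs ! (Suc k mod n)" using nth[of 0] ys k(1) by (simp add: hd_conv_nth)
  moreover have "is_cycle E ys" "cycle_edges ys = cycle_edges xs" "set ys = set xs"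
    using assms(1) unfolding ys_def by (simp_all only: cycle_rotate is_cycle_rotate set_rotate)
  ultimately show thesis using that ys k(2) n_def by (simp add: insert_commute)
qed

lemma cycle_edges_elem:
  assumes "is_cycle E xs" "e \<in> cycle_edges xs"
  obtains u v where "e = {u, v}" "u \<noteq> v" "u \<in> set xs" "v \<in> set xs"
proof -
  obtain ys where ys: "is_cycle E ys" "cycle_edges ys = cycle_edges xs" "set ys = set xs"
    "length ys = length xs" "e = {last ys, hd ys}"
    using cycle_rotate_to_edge[OF assms] .
  have "distinct ys" "length ys \<ge> 3" using ys(1) by (simp_all add: is_cycle_def)
  then have "ys \<noteq> []" by auto
  then have "hd ys = ys ! 0" "last ys = ys ! (length ys - 1)" by (simp_all add: hd_conv_nth last_conv_nth)
  then have "last ys \<noteq> hd ys"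
    using nth_eq_iff_index_eq[OF \<open>distinct ys\<close>, of "length ys - 1" 0] \<open>length ys \<ge> 3\<close> \<open>ys \<noteq> []\<close>
    by simp
  moreover have "last ys \<in> set ys" "hd ys \<in> set ys" using \<open>ys \<noteq> []\<close> by simp_all
  then have "last ys \<in> set xs" "hd ys \<in> set xs" unfolding ys(3) .
  ultimately show thesis by (intro that[of "last ys" "hd ys"]) (simp_all add: ys(5))
qed

lemma cycle_split_at:
  assumes c: "is_cycle E xs" and pq: "p \<in> set xs" "q \<in> set xs" "p \<noteq> q"
  obtains A B where "is_path E A" "is_path E B" "hd A = p" "last A = q" "hd B = p" "last B = q"
    "length A \<ge> 2" "length B \<ge> 2" "set A \<inter> set B = {p, q}" "set A \<union> set B = set xs"
    "path_edges A \<union> path_edges B = cycle_edges xs" "length A + length B = length xs + 2"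
proof -
  obtain ys where "is_cycle E ys" and ys: "cycle_edges ys = cycle_edges xs"
    "set ys = set xs" "length ys = length xs" "hd ys = p"
    using cycle_rotate_to[OF c pq(1)] .
  then obtain M where "ys = p # M" using ys(4) by (cases ys) (auto simp: is_cycle_def)
  moreover have "q \<in> set M" using pq ys(2) \<open>ys = p # M\<close> by auto
  ultimately obtain M1 M2 where ys_eq: "ys = p # M1 @ q # M2" by (auto dest: split_list)
  define A where "A = p # M1 @ [q]"
  define C where "C = q # M2 @ [p]"
  have closed: "ys @ [hd ys] = A @ tl C" unfolding ys_eq A_def C_def by simp
  have edges: "path_edges A \<union> path_edges C = cycle_edges xs"
    using path_edges_append_tl[of A C] ys(1) closed cycle_edges_closed_path[of ys]
    unfolding A_def C_def ys_eq by simp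
  have "distinct ys" "cycle_edges ys \<subseteq> E" using \<open>is_cycle E ys\<close> by (auto simp: is_cycle_iff)
  then have "is_path E A" "is_path E C" using edges ys(1) unfolding is_path_iff A_def C_def ys_eq by auto
  moreover have "set A \<inter> set (rev C) = {p, q}" "set A \<union> set (rev C) = set xs"
    using \<open>distinct ys\<close> ys(2) unfolding A_def C_def ys_eq by auto
  moreover have "length A + length (rev C) = length xs + 2"
    using ys(3) unfolding A_def C_def ys_eq by simp
  moreover have "hd A = p" "last A = q" "hd (rev C) = p" "last (rev C) = q"
    "length A \<ge> 2" "length (rev C) \<ge> 2"
    unfolding A_def C_def by (simp_all add: hd_rev last_rev)
  ultimately show thesis using that[of A "rev C"] edges by simp
qed

lemma cycle_of_paths:
  assumes X: "is_path E X" and Y: "is_path E Y" and ends: "hd X = hd Y" "last X = last Y"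
    and meet: "set X \<inter> set Y = {hd X, last X}" "hd X \<noteq> last X"
    and len: "length X + length Y \<ge> 5"
  obtains zs where "is_cycle E zs" "cycle_edges zs = path_edges X \<union> path_edges Y"
    "length zs + 2 = length X + length Y"
proof -
  have "X \<noteq> []" "Y \<noteq> []" using X Y by (auto simp: is_path_def)
  moreover have len2: "length xs \<ge> 2" if "xs \<noteq> []" "hd xs \<noteq> last xs" for xs :: "'a list"
    using that by (cases xs) (auto split: if_splits simp: Suc_le_eq)
  ultimately have "length X \<ge> 2" "length Y \<ge> 2"
    using len2[of X] len2[of Y] ends meet(2) by simp_all
  then have "rev Y = last X # butlast (tl (rev Y)) @ [hd X]"
    using Cons_internal_snoc[of "rev Y"] ends by (simp add: hd_rev last_rev)
  then obtain M where M: "rev Y = last X # M @ [hd X]" by blast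
  have "distinct X" "distinct (rev Y)" using X Y by (auto simp: is_path_def)
  then have "distinct M" and ends_M: "last X \<notin> set M" "hd X \<notin> set M" unfolding M by auto
  have "x \<notin> set M" if "x \<in> set X" for x
  proof
    assume "x \<in> set M"
    then have "x \<in> set X \<inter> set Y" using that arg_cong[OF M, of set] by auto
    then show False unfolding meet(1) using \<open>x \<in> set M\<close> ends_M by auto
  qed
  with \<open>distinct X\<close> \<open>distinct M\<close> have "distinct (X @ M)" by auto
  have closed: "(X @ M) @ [hd (X @ M)] = X @ tl (rev Y)"
    using M \<open>X \<noteq> []\<close> by simp
  have "path_edges (X @ tl (rev Y)) = path_edges X \<union> path_edges (rev Y)"
    by (rule path_edges_append_tl) (use M \<open>X \<noteq> []\<close> in auto)
  then have edges: "cycle_edges (X @ M) = path_edges X \<union> path_edges Y"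
    using cycle_edges_closed_path[of "X @ M"] closed \<open>X \<noteq> []\<close> by simp
  have lengths: "length (X @ M) + 2 = length X + length Y"
    using arg_cong[OF M, of length] by simp
  have "is_cycle E (X @ M)"
    using \<open>distinct (X @ M)\<close> edges lengths len X Y by (auto simp: is_cycle_iff is_path_iff)
  then show thesis using that edges lengths by blast
qed

text \<open>The ear is the segment of the cycle from the last vertex of S before the edge g to the first
  vertex of S after it.\<close>

lemma cycle_ear:
  assumes c: "is_cycle E ds" and F: "\<And>e. e \<in> F \<Longrightarrow> e \<subseteq> S"
    and g: "g \<in> cycle_edges ds" "g \<notin> F"
    and two: "u \<in> S" "v \<in> S" "u \<in> set ds" "v \<in> set ds" "u \<noteq> v"
  obtains R where "is_path E R" "length R \<ge> 2" "hd R \<in> S" "last R \<in> S" "hd R \<noteq> last R"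
    "internal R \<inter> S = {}" "path_edges R \<inter> F = {}"
proof -
  obtain ys where ys: "is_cycle E ys" "cycle_edges ys = cycle_edges ds" "set ys = set ds"
    "length ys = length ds" "g = {last ys, hd ys}"
    using cycle_rotate_to_edge[OF c g(1)] .
  obtain L1 b rest where ys_eq: "ys = L1 @ b # rest" and b: "b \<in> S" and L1: "\<forall>x\<in>set L1. x \<notin> S"
    using split_list_first_prop[of ys "\<lambda>x. x \<in> S"] two ys(3) by blast
  have "u \<in> set ys" "v \<in> set ys" using two ys(3) by auto
  then have "\<exists>x\<in>set rest. x \<in> S" using two L1 unfolding ys_eq by auto
  then obtain Mid a L2 where rest: "rest = Mid @ a # L2" and a: "a \<in> S" and L2: "\<forall>x\<in>set L2. x \<notin> S"
    using split_list_last_prop[of rest "\<lambda>x. x \<in> S"] by blast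
  have "distinct ys" using ys(1) by (simp add: is_cycle_def)
  define R where "R = a # L2 @ L1 @ [b]"
  have "ys = (L1 @ b # Mid) @ (a # L2)" unfolding ys_eq rest by simp
  then have "rotate (length (L1 @ b # Mid)) ys = R @ Mid" unfolding R_def by (simp only: rotate_append) simp
  then have "is_path E (R @ Mid)"
    using ys(1) is_cycle_rotate[of E "length (L1 @ b # Mid)" ys] by (metis is_cycle_imp_is_path)
  then have path: "is_path E R" using is_path_take[of E "R @ Mid" "length R"] by (simp add: R_def)
  have ends: "hd R = a" "last R = b" "hd R \<noteq> last R"
    using \<open>distinct ys\<close> unfolding R_def ys_eq rest by auto
  have inner: "internal R \<inter> S = {}" using L1 L2 unfolding R_def internal_def by (auto simp: butlast_append)
  have "e \<notin> F" if e: "e \<in> path_edges R" for e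
  proof
    assume "e \<in> F"
    obtain i where "Suc i < length R" "e = {R ! i, R ! Suc i}" using e unfolding path_edges_def by blast
    then obtain x y where xy: "e = {x, y}" by blast
    then have "x \<notin> internal R" "y \<notin> internal R" using F[OF \<open>e \<in> F\<close>] inner by auto
    then have "R = [x, y] \<or> R = [y, x]" using path_edge_of_ends[of x y R] e xy by blast
    then have "L1 = []" "L2 = []" "e = {a, b}" using xy unfolding R_def by auto
    then have "e = g" using ys(5) unfolding ys_eq rest by (auto simp: insert_commute)
    then show False using g(2) \<open>e \<in> F\<close> by simp
  qed
  then have "path_edges R \<inter> F = {}" by blast
  moreover have "length R \<ge> 2" unfolding R_def by simp
  ultimately show thesis using that path ends a b inner by simp
qed

section \<open>Two-colourings and odd cycles\<close>

definition bicolouring :: "('a \<Rightarrow> bool) \<Rightarrow> 'a set set \<Rightarrow> bool" where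
  "bicolouring c F \<longleftrightarrow> (\<forall>u v. {u, v} \<in> F \<longrightarrow> c u \<noteq> c v)"

lemma bicolouring_subset: "F' \<subseteq> F \<Longrightarrow> bicolouring c F \<Longrightarrow> bicolouring c F'"
  and bicolouring_Un: "bicolouring c F \<Longrightarrow> bicolouring c G \<Longrightarrow> bicolouring c (F \<union> G)"
  unfolding bicolouring_def by blast+

lemma bicolouring_path_cong:
  "(\<And>v. v \<in> set xs \<Longrightarrow> c v = c' v) \<Longrightarrow> bicolouring c' (path_edges xs) \<Longrightarrow> bicolouring c (path_edges xs)"
  unfolding bicolouring_def using path_edges_subset_set by (metis insert_subset)

lemma path_bicolouring:
  "distinct xs \<Longrightarrow> xs \<noteq> [] \<Longrightarrow>
   \<exists>c. c (hd xs) = b \<and> c (last xs) = (b = odd (length xs)) \<and> bicolouring c (path_edges xs)"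
proof (induction xs arbitrary: b rule: induct_list012)
  case (2 x)
  then show ?case by (intro exI[of _ "\<lambda>_. b"]) (simp add: bicolouring_def)
next
  case (3 x y zs)
  obtain c where c: "c y = (\<not> b)" "c (last (y # zs)) = ((\<not> b) = odd (length (y # zs)))"
      "bicolouring c (path_edges (y # zs))"
    using "3.IH"(2)[of "\<not> b"] "3.prems"(1) by auto
  have x: "x \<notin> set (y # zs)" using "3.prems"(1) by simp
  have "bicolouring (c(x := b)) (path_edges (y # zs))"
    by (rule bicolouring_path_cong[OF _ c(3)]) (use x in auto)
  moreover have "last (y # zs) \<noteq> x" using x by (metis last_in_set list.discI)
  ultimately show ?case using c x
    by (intro exI[of _ "c(x := b)"]) (auto simp: bicolouring_def doubleton_eq_iff)
qed simp

lemma bicolouring_alternates: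
  assumes "bicolouring c (path_edges ws)" "i < length ws"
  shows "c (ws ! i) = (c (ws ! 0) = even i)"
  using assms(2)
proof (induction i)
  case (Suc i)
  have "{ws ! i, ws ! Suc i} \<in> path_edges ws" using Suc.prems unfolding path_edges_def by blast
  then have "c (ws ! i) \<noteq> c (ws ! Suc i)" using assms(1) unfolding bicolouring_def by blast
  then show ?case using Suc by auto
qed simp

text \<open>A closed walk with an odd number of edges is a list of even length.\<close>

lemma odd_closed_walk_not_bicolourable:
  assumes "ws \<noteq> []" "hd ws = last ws" "even (length ws)"
  shows "\<not> bicolouring c (path_edges ws)"
proof
  assume c: "bicolouring c (path_edges ws)"
  define n where "n = length ws - 1"
  have n: "n < length ws" "odd n" using assms(1,3) n_def by (cases ws; auto)+
  have "ws ! n = ws ! 0" using assms(1,2) n_def by (simp add: hd_conv_nth last_conv_nth)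
  then show False using bicolouring_alternates[OF c n(1)] n(2) by simp
qed

lemma odd_cycle_not_bicolourable:
  assumes "is_cycle E xs" "odd (length xs)"
  shows "\<not> bicolouring c (cycle_edges xs)"
proof -
  have "xs \<noteq> []" using assms(1) by (auto simp: is_cycle_def)
  then show ?thesis
    using odd_closed_walk_not_bicolourable[of "xs @ [hd xs]" c] assms(2)
    by (simp add: cycle_edges_closed_path)
qed

lemma closed_walk_split:
  assumes "i < j" "j < length ws" "ws ! i = ws ! j"
  defines "W1 \<equiv> take (Suc (j - i)) (drop i ws)" and "W2 \<equiv> take (Suc i) ws @ tl (drop j ws)"
  shows "path_edges W1 \<subseteq> path_edges ws" "path_edges W2 \<subseteq> path_edges ws"
    "hd W1 = last W1" "hd W2 = hd ws" "last W2 = last ws"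
    "length W1 = Suc (j - i)" "length W1 + length W2 = Suc (length ws)"
proof -
  have split: "take (Suc i) ws \<noteq> []" "drop j ws \<noteq> []" "last (take (Suc i) ws) = hd (drop j ws)"
    using assms(1-3) by (auto simp: take_Suc_conv_app_nth hd_drop_conv_nth)
  show "path_edges W1 \<subseteq> path_edges ws"
    unfolding W1_def using path_edges_take_subset path_edges_drop_subset by blast
  show "path_edges W2 \<subseteq> path_edges ws"
    unfolding W2_def path_edges_append_tl[OF split]
    using path_edges_take_subset path_edges_drop_subset by blast
  show "hd W1 = last W1" unfolding W1_def using assms(1-3) by (simp add: hd_drop_conv_nth last_conv_nth)
  show "hd W2 = hd ws" unfolding W2_def using assms(2) by (cases ws) auto
  show "last W2 = last ws"
  proof (cases "tl (drop j ws) = []")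
    case True
    then have "last W2 = hd (drop j ws)" unfolding W2_def using split by simp
    also have "\<dots> = last (drop j ws)" using True split(2) by (cases "drop j ws") auto
    finally show ?thesis using assms(2) by simp
  next
    case False
    then have "last W2 = last (drop j ws)" unfolding W2_def by (cases "drop j ws") auto
    then show ?thesis using assms(2) by simp
  qed
  show "length W1 = Suc (j - i)" "length W1 + length W2 = Suc (length ws)"
    unfolding W1_def W2_def using assms(1,2) by auto
qed

lemma odd_closed_walk_odd_cycle:
  assumes "path_edges ws \<subseteq> E" "length ws \<ge> 2" "hd ws = last ws" "even (length ws)"
    and "\<forall>v. {v} \<notin> E"
  shows "\<exists>xs. is_cycle E xs \<and> odd (length xs)"
  using assms(1-4)
proof (induction "length ws" arbitrary: ws rule: less_induct)
  case less
  define zs where "zs = butlast ws"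
  have ws: "ws = zs @ [hd zs]" "zs \<noteq> []"
    using less.prems(2,3) unfolding zs_def by (cases ws; auto)+
  have odd: "odd (length zs)" using less.prems(2,4) unfolding zs_def by auto
  show ?case
  proof (cases "distinct zs")
    case True
    have "length zs \<noteq> 1"
    proof
      assume "length zs = 1"
      then obtain x where "zs = [x]" by (cases zs) auto
      then show False using ws(1) less.prems(1) assms(5) by simp
    qed
    moreover have "length zs \<noteq> 0" "length zs \<noteq> 2" using odd by auto
    ultimately have "length zs \<ge> 3" by linarith
    then have "is_cycle E zs"
      using True less.prems(1) ws cycle_edges_closed_path[of zs] by (simp add: is_cycle_iff)
    then show ?thesis using odd by blast
  next
    case False
    then obtain i j where ij: "i < j" "j < length zs" "zs ! i = zs ! j"
      by (metis distinct_conv_nth linorder_neqE_nat)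
    then have ij': "j < length ws" "ws ! i = ws ! j" using ws(1) by (auto simp: nth_append)
    note W = closed_walk_split[OF ij(1) ij']
    let ?W1 = "take (Suc (j - i)) (drop i ws)" and ?W2 = "take (Suc i) ws @ tl (drop j ws)"
    have "even (length ?W1) \<or> even (length ?W2)"
    proof (rule ccontr)
      assume "\<not> (even (length ?W1) \<or> even (length ?W2))"
      then have "even (length ?W1 + length ?W2)" by simp
      then have "even (Suc (length ws))" unfolding W(7) .
      then show False using less.prems(4) by simp
    qed
    moreover have "length ?W1 < length ws" "length ?W2 < length ws" "length ?W1 \<ge> 2" "length ?W2 \<ge> 2"
      using W(6,7) ij ws(1) by auto
    ultimately show ?thesis
      using less.hyps W(1-5) less.prems(1,3) by (metis order.trans)
  qed
qed

definition reachable :: "'a set set \<Rightarrow> 'a \<Rightarrow> 'a \<Rightarrow> bool" where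
  "reachable E u v \<longleftrightarrow> (\<exists>ws. ws \<noteq> [] \<and> hd ws = u \<and> last ws = v \<and> path_edges ws \<subseteq> E)"

lemma reachable_refl: "reachable E v v"
  unfolding reachable_def by (intro exI[of _ "[v]"]) simp

lemma reachable_sym: "reachable E u v \<Longrightarrow> reachable E v u"
  unfolding reachable_def by (metis path_edges_rev Nil_is_rev_conv hd_rev last_rev)

lemma hd_last_append_tl:
  assumes "xs \<noteq> []" "ys \<noteq> []" "last xs = hd ys"
  shows "hd (xs @ tl ys) = hd xs" "last (xs @ tl ys) = last ys"
  using assms by (cases ys; auto)+

lemma reachable_trans: "reachable E u v \<Longrightarrow> reachable E v w \<Longrightarrow> reachable E u w"
proof -
  assume "reachable E u v" "reachable E v w"
  then obtain xs ys where xs: "xs \<noteq> []" "hd xs = u" "last xs = v" "path_edges xs \<subseteq> E"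
    and ys: "ys \<noteq> []" "hd ys = v" "last ys = w" "path_edges ys \<subseteq> E"
    unfolding reachable_def by blast
  then have "last xs = hd ys" by simp
  then show ?thesis unfolding reachable_def
    using path_edges_append_tl[OF xs(1) ys(1)] hd_last_append_tl[OF xs(1) ys(1)] xs ys
    by (intro exI[of _ "xs @ tl ys"]) auto
qed

lemma reachable_edge: "{u, v} \<in> E \<Longrightarrow> reachable E u v"
  unfolding reachable_def by (intro exI[of _ "[u, v]"]) simp

lemma odd_walks_to_edge_odd_cycle:
  assumes no_loop: "\<forall>v. {v} \<notin> E" and uv: "{u, v} \<in> E"
    and Wu: "Wu \<noteq> []" "hd Wu = r" "last Wu = u" "path_edges Wu \<subseteq> E" "odd (length Wu)"
    and Wv: "Wv \<noteq> []" "hd Wv = r" "last Wv = v" "path_edges Wv \<subseteq> E" "odd (length Wv)"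
  shows "\<exists>xs. is_cycle E xs \<and> odd (length xs)"
proof (rule odd_closed_walk_odd_cycle[of "Wu @ rev Wv"])
  show "path_edges (Wu @ rev Wv) \<subseteq> E"
    using path_edges_append[of Wu "rev Wv"] Wu Wv uv by (simp add: hd_rev)
  have "length Wu \<ge> 1" "length Wv \<ge> 1" using Wu(1) Wv(1) by (simp_all add: Suc_le_eq)
  then show "length (Wu @ rev Wv) \<ge> 2" by simp
  show "even (length (Wu @ rev Wv))" using Wu Wv by simp
  show "hd (Wu @ rev Wv) = last (Wu @ rev Wv)" using Wu Wv by (simp add: last_rev)
qed (fact no_loop)

text \<open>Colour each vertex by the parity of the walks reaching it from a fixed root of its
  component; without odd cycles (hence without odd closed walks) this parity is well defined.\<close>

lemma no_odd_cycle_bicolourable: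
  assumes no_loop: "\<forall>v. {v} \<notin> E" and no_odd: "\<nexists>xs. is_cycle E xs \<and> odd (length xs)"
  shows "\<exists>c. bicolouring c E"
proof -
  define root where "root v = Eps (reachable E v)" for v
  define c where "c v \<longleftrightarrow> (\<exists>ws. ws \<noteq> [] \<and> hd ws = root v \<and> last ws = v \<and>
    path_edges ws \<subseteq> E \<and> odd (length ws))" for v
  have "c u \<noteq> c v" if uv: "{u, v} \<in> E" for u v
  proof
    assume same: "c u = c v"
    have "reachable E u = reachable E v"
    proof
      fix w show "reachable E u w = reachable E v w"
        using reachable_edge[OF uv] reachable_sym reachable_trans by metis
    qed
    then have root_eq: "root u = root v" unfolding root_def by simp
    define r where "r = root v"
    have "reachable E v r" unfolding r_def root_def by (rule someI[of "reachable E v" v]) (rule reachable_refl)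
    then have ru: "reachable E r u"
      using reachable_trans[OF reachable_sym reachable_sym[OF reachable_edge[OF uv]]] by blast
    show False
    proof (cases "c v")
      case True
      then obtain Wv where Wv: "Wv \<noteq> []" "hd Wv = r" "last Wv = v" "path_edges Wv \<subseteq> E"
        "odd (length Wv)" unfolding c_def r_def by blast
      obtain Wu where Wu: "Wu \<noteq> []" "hd Wu = r" "last Wu = u" "path_edges Wu \<subseteq> E"
        "odd (length Wu)" using True same unfolding c_def r_def root_eq by blast
      have "\<exists>xs. is_cycle E xs \<and> odd (length xs)"
        by (rule odd_walks_to_edge_odd_cycle[OF no_loop uv Wu Wv])
      then show False using no_odd by blast
    next
      case False
      obtain W where W: "W \<noteq> []" "hd W = r" "last W = u" "path_edges W \<subseteq> E"
        using ru unfolding reachable_def by blast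
      have "even (length W)" using same False W unfolding c_def r_def root_eq by auto
      moreover have "path_edges (W @ [v]) \<subseteq> E"
        using path_edges_append[of W "[v]"] W uv by simp
      ultimately have "c v" unfolding c_def using W r_def by (intro exI[of _ "W @ [v]"]) auto
      then show False using False by simp
    qed
  qed
  then show ?thesis unfolding bicolouring_def by blast
qed

section \<open>Colourings and (3,2)-criticality\<close>

lemma simple_graph_edgeE:
  assumes "simple_graph V E" "e \<in> E"
  obtains u v where "e = {u, v}" "u \<in> V" "v \<in> V" "u \<noteq> v"
  using assms unfolding simple_graph_def by blast

lemma simple_graph_edgeD:
  assumes "simple_graph V E" "{u, v} \<in> E" shows "u \<in> V \<and> v \<in> V \<and> u \<noteq> v"
  using simple_graph_edgeE[OF assms] by (metis doubleton_eq_iff)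

lemma simple_graph_finite:
  assumes "simple_graph V E" shows "finite E"
proof -
  have "E \<subseteq> Pow V"
    using simple_graph_edgeE[OF assms] by blast
  moreover have "finite V" using assms by (simp add: simple_graph_def)
  ultimately show ?thesis by (meson finite_Pow_iff finite_subset)
qed

lemma colourable_subset: "E' \<subseteq> E \<Longrightarrow> colourable V E k \<Longrightarrow> colourable V E' k"
  unfolding colourable_def proper_colouring_def by blast

lemma colourable_mono: "colourable V E k \<Longrightarrow> k \<le> k' \<Longrightarrow> colourable V E k'"
  unfolding colourable_def proper_colouring_def by (meson less_le_trans)

lemma colourable_chromatic_number:
  assumes "simple_graph V E" "E' \<subseteq> E" shows "colourable V E' (chromatic_number V E')"
proof -
  have "finite V" using assms(1) by (simp add: simple_graph_def)
  then obtain h where h: "bij_betw h V {0..<card V}" using ex_bij_betw_finite_nat by blast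
  have "proper_colouring V E' h (card V)"
    unfolding proper_colouring_def
  proof (intro conjI allI ballI impI)
    fix v assume "v \<in> V" then show "h v < card V" using h by (auto simp: bij_betw_def)
  next
    fix u v assume "{u, v} \<in> E'"
    then have "u \<in> V \<and> v \<in> V \<and> u \<noteq> v" using simple_graph_edgeD[OF assms(1)] assms(2) by blast
    then show "h u \<noteq> h v" using h by (auto simp: bij_betw_def inj_on_def)
  qed
  then have "colourable V E' (card V)" unfolding colourable_def by blast
  then show ?thesis unfolding chromatic_number_def by (rule LeastI)
qed

lemma chromatic_number_le: "colourable V E k \<Longrightarrow> chromatic_number V E \<le> k"
  unfolding chromatic_number_def by (rule Least_le)

lemma colourable_1_iff_no_edges:
  assumes "simple_graph V E" "E' \<subseteq> E" shows "colourable V E' 1 \<longleftrightarrow> E' = {}"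
proof
  assume "colourable V E' 1"
  then obtain c where c: "proper_colouring V E' c 1" unfolding colourable_def by blast
  show "E' = {}"
  proof (rule ccontr)
    assume "E' \<noteq> {}"
    then obtain u v where "{u, v} \<in> E'" "u \<in> V" "v \<in> V"
      using simple_graph_edgeE[OF assms(1)] assms(2) by (metis subsetD ex_in_conv)
    then show False using c unfolding proper_colouring_def by fastforce
  qed
qed (auto simp: colourable_def proper_colouring_def)

lemma colourable_2_iff_no_odd_cycle:
  assumes sg: "simple_graph V E" and "E' \<subseteq> E"
  shows "colourable V E' 2 \<longleftrightarrow> (\<nexists>xs. is_cycle E' xs \<and> odd (length xs))"
proof
  assume "colourable V E' 2"
  then obtain c where c: "proper_colouring V E' c 2" unfolding colourable_def by blast
  have "bicolouring (\<lambda>v. c v = 0) E'"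
    unfolding bicolouring_def
  proof (intro allI impI)
    fix u v assume uv: "{u, v} \<in> E'"
    then have "c u < 2" "c v < 2" "c u \<noteq> c v"
      using c simple_graph_edgeD[OF sg] \<open>E' \<subseteq> E\<close> unfolding proper_colouring_def by blast+
    then show "(c u = 0) \<noteq> (c v = 0)" by auto
  qed
  then show "\<nexists>xs. is_cycle E' xs \<and> odd (length xs)"
    using odd_cycle_not_bicolourable bicolouring_subset[OF cycle_edges_subset] by blast
next
  assume "\<nexists>xs. is_cycle E' xs \<and> odd (length xs)"
  moreover have "\<forall>v. {v} \<notin> E'" using simple_graph_edgeD[OF sg, of v v for v] \<open>E' \<subseteq> E\<close> by auto
  ultimately obtain c where "bicolouring c E'" using no_odd_cycle_bicolourable by blast
  then have "proper_colouring V E' (\<lambda>v. if c v then 1 else 0) 2"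
    unfolding proper_colouring_def bicolouring_def by auto
  then show "colourable V E' 2" unfolding colourable_def by blast
qed

lemma colourable_single_edge:
  assumes "simple_graph V E" "g \<in> E" shows "colourable V {g} 2"
proof -
  obtain u v where "g = {u, v}" "u \<noteq> v" using simple_graph_edgeE[OF assms] by metis
  then have "proper_colouring V {g} (\<lambda>w. if w = u then 1 else 0) 2"
    unfolding proper_colouring_def by (auto simp: doubleton_eq_iff)
  then show ?thesis unfolding colourable_def by blast
qed

lemma chromatic_number_single_edge:
  assumes sg: "simple_graph V E" and g: "g \<in> E" shows "chromatic_number V {g} = 2"
proof -
  have "chromatic_number V {g} \<le> 2" using chromatic_number_le colourable_single_edge[OF sg g] by blast
  moreover have "\<not> chromatic_number V {g} \<le> 1"
    using colourable_1_iff_no_edges[OF sg, of "{g}"] colourable_mono[OF colourable_chromatic_number[OF sg]] g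
    by blast
  ultimately show ?thesis by linarith
qed

lemma es_chi_witness:
  assumes sg: "simple_graph V E" and "E' \<subseteq> E" and chi: "chromatic_number V E' = 3"
  obtains F where "F \<subseteq> E'" "card F = es_chi V E'" "chromatic_number V (E' - F) = 2"
proof -
  have "colourable V {} 1" using colourable_1_iff_no_edges[OF sg, of "{}"] by simp
  then have "E' \<noteq> {}" using chi chromatic_number_le[of V "{}" 1] by auto
  then obtain g where g: "g \<in> E'" by blast
  have "E' - (E' - {g}) = {g}" using g by blast
  then have "chromatic_number V (E' - (E' - {g})) = chromatic_number V E' - 1"
    using chromatic_number_single_edge[OF sg] g \<open>E' \<subseteq> E\<close> chi by auto
  then have "\<exists>k F. F \<subseteq> E' \<and> card F = k \<and> chromatic_number V (E' - F) = chromatic_number V E' - 1"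
    by (intro exI[of _ "card (E' - {g})"] exI[of _ "E' - {g}"]) simp
  then have "\<exists>F. F \<subseteq> E' \<and> card F = es_chi V E' \<and> chromatic_number V (E' - F) = chromatic_number V E' - 1"
    unfolding es_chi_def by (rule LeastI_ex)
  then show thesis using that chi by auto
qed

definition odd_cycles_avoid_edges :: "'a set set \<Rightarrow> bool" where
  "odd_cycles_avoid_edges E \<longleftrightarrow>
     (\<forall>a\<in>E. \<exists>xs. is_cycle E xs \<and> odd (length xs) \<and> a \<notin> cycle_edges xs)"

definition odd_cycles_hit_by_pairs :: "'a set set \<Rightarrow> bool" where
  "odd_cycles_hit_by_pairs E \<longleftrightarrow>
     (\<forall>e\<in>E. \<exists>f. \<forall>xs. is_cycle E xs \<and> odd (length xs) \<longrightarrow> e \<in> cycle_edges xs \<or> f \<in> cycle_edges xs)"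

lemma critical_3_2_delete_edge:
  assumes sg: "simple_graph V E" and cr: "critical_3_2 V E" and e: "e \<in> E"
  shows "chromatic_number V (E - {e}) = 3"
proof -
  have chi: "chromatic_number V E = 3" "es_chi V E = 2" using cr by (simp_all add: critical_3_2_def)
  have "colourable V E 3" using colourable_chromatic_number[OF sg, of E] chi by simp
  then have le3: "chromatic_number V (E - {e}) \<le> 3"
    by (meson chromatic_number_le colourable_subset Diff_subset)
  have ne2: "chromatic_number V (E - {e}) \<noteq> 2"
  proof
    assume "chromatic_number V (E - {e}) = 2"
    then have "es_chi V E \<le> 1"
      unfolding es_chi_def by (intro Least_le exI[of _ "{e}"]) (use e chi in auto)
    then show False using chi by simp
  qed
  have "\<not> colourable V (E - {e}) 1"
  proof
    assume "colourable V (E - {e}) 1"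
    then have "E \<subseteq> {e}" using colourable_1_iff_no_edges[OF sg, of "E - {e}"] by blast
    then have "colourable V E 2" using colourable_single_edge[OF sg e] colourable_subset by blast
    then show False using chromatic_number_le[of V E 2] chi by simp
  qed
  then have "\<not> chromatic_number V (E - {e}) \<le> 1"
    using colourable_mono[OF colourable_chromatic_number[OF sg, of "E - {e}"]] by blast
  then show ?thesis using le3 ne2 by linarith
qed

lemma critical_3_2_odd_cycles_avoid_edges:
  assumes sg: "simple_graph V E" and cr: "critical_3_2 V E"
  shows "odd_cycles_avoid_edges E"
  unfolding odd_cycles_avoid_edges_def
proof
  fix a assume a: "a \<in> E"
  have "\<not> colourable V (E - {a}) 2"
    using chromatic_number_le[of V "E - {a}" 2] critical_3_2_delete_edge[OF sg cr a] by auto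
  then obtain xs where "is_cycle (E - {a}) xs" "odd (length xs)"
    using colourable_2_iff_no_odd_cycle[OF sg, of "E - {a}"] by blast
  then show "\<exists>xs. is_cycle E xs \<and> odd (length xs) \<and> a \<notin> cycle_edges xs"
    using is_cycle_mono cycle_edges_subset by blast
qed

text \<open>Deleting e leaves chromatic number 3 but edge stability below 2, so one further edge f
  destroys all remaining odd cycles.\<close>

lemma critical_3_2_odd_cycles_hit_by_pairs:
  assumes sg: "simple_graph V E" and cr: "critical_3_2 V E"
  shows "odd_cycles_hit_by_pairs E"
  unfolding odd_cycles_hit_by_pairs_def
proof
  fix e assume e: "e \<in> E"
  define E' where "E' = E - {e}"
  have "chromatic_number V E' = 3" using critical_3_2_delete_edge[OF sg cr e] E'_def by simp
  then obtain F where F: "F \<subseteq> E'" "card F = es_chi V E'" "chromatic_number V (E' - F) = 2"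
    using es_chi_witness[OF sg, of E'] E'_def by blast
  have "card F \<le> 1" using F(2) cr e E'_def unfolding critical_3_2_def edge_stability_critical_def by fastforce
  moreover have "finite F" using F(1) simple_graph_finite[OF sg] E'_def by (meson finite_Diff finite_subset)
  ultimately obtain f where f: "F \<subseteq> {f}"
  proof (cases "F = {}")
    case False
    then obtain f where "f \<in> F" by blast
    then have "F \<subseteq> {f}" using card_le_Suc0_iff_eq[OF \<open>finite F\<close>] \<open>card F \<le> 1\<close> by auto
    then show thesis by (rule that)
  qed (use that in blast)
  have "colourable V (E' - F) 2"
    using colourable_chromatic_number[OF sg, of "E' - F"] F(3) E'_def by auto
  then have no_odd: "\<nexists>xs. is_cycle (E' - F) xs \<and> odd (length xs)"
    using colourable_2_iff_no_odd_cycle[OF sg, of "E' - F"] E'_def by blast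
  have "e \<in> cycle_edges xs \<or> f \<in> cycle_edges xs" if "is_cycle E xs" "odd (length xs)" for xs
  proof (rule ccontr)
    assume "\<not> (e \<in> cycle_edges xs \<or> f \<in> cycle_edges xs)"
    then have "cycle_edges xs \<subseteq> E' - F" using cycle_edges_subset[OF that(1)] f E'_def by auto
    then show False using is_cycle_restrict[OF that(1)] that(2) no_odd by blast
  qed
  then show "\<exists>f. \<forall>xs. is_cycle E xs \<and> odd (length xs) \<longrightarrow> e \<in> cycle_edges xs \<or> f \<in> cycle_edges xs"
    by blast
qed

section \<open>Subdivisions from theta graphs with an ear\<close>

definition covered_by_subdivision :: "'a set set \<Rightarrow> 'a set set \<Rightarrow> bool" where
  "covered_by_subdivision E F \<longleftrightarrow> (\<exists>H \<in> {mg_K2_4, mg_K4, mg_K3_221, mg_C4_2121}. \<exists>f P.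
     is_subdivision E H f P \<and> F \<subseteq> subdivision_edges H P)"

lemma branch_indices_in_range:
  "(n, es) \<in> {mg_K2_4, mg_K4, mg_K3_221, mg_C4_2121} \<Longrightarrow> e \<in> set es \<Longrightarrow> fst e < n \<and> snd e < n"
  by (auto simp: mg_K2_4_def mg_K4_def mg_K3_221_def mg_C4_2121_def)

text \<open>Branch vertices and paths are given as lists: bs ! i is the i-th branch vertex and Ps ! k
  replaces the k-th edge.\<close>

lemma covered_by_subdivisionI:
  assumes H: "(n, es) \<in> {mg_K2_4, mg_K4, mg_K3_221, mg_C4_2121}"
    and bs: "distinct bs" "length bs = n" and Ps: "length Ps = length es"
    and paths: "list_all2 (\<lambda>e X. path_between E (bs ! fst e) (bs ! snd e) X \<and> internal X \<inter> set bs = {})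
      es Ps"
    and disj: "sorted_wrt internally_disjoint Ps"
    and F: "F \<subseteq> (\<Union>X\<in>set Ps. path_edges X)"
  shows "covered_by_subdivision E F"
proof -
  have path: "path_between E (bs ! fst (es ! k)) (bs ! snd (es ! k)) (Ps ! k)"
    and inner: "internal (Ps ! k) \<inter> set bs = {}" if "k < length es" for k
    using paths that by (simp_all add: list_all2_conv_all_nth)
  have branch: "(\<lambda>i. bs ! i) ` {..<n} = set bs" using bs(2) by (auto simp: set_conv_nth)
  have "internal (Ps ! k) \<inter> set (Ps ! l) = {} \<and> path_edges (Ps ! k) \<inter> path_edges (Ps ! l) = {}"
    if "k < length es" "l < length es" "k \<noteq> l" for k l
  proof -
    have "internally_disjoint (Ps ! k) (Ps ! l)"
      using sorted_wrt_internally_disjoint_nth[OF disj] that Ps by simp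
    moreover have "fst (es ! l) < n" "snd (es ! l) < n"
      using branch_indices_in_range[OF H nth_mem[OF that(2)]] by simp_all
    then have "hd (Ps ! l) \<in> set bs" "last (Ps ! l) \<in> set bs"
      using path[OF that(2)] bs(2) by (simp_all add: path_between_def nth_mem)
    then have "set (Ps ! l) \<subseteq> set bs \<union> internal (Ps ! l)"
      using path[OF that(2)] set_eq_ends_internal[of "Ps ! l"] by (simp add: path_between_def)
    ultimately show ?thesis using inner[OF that(1)] unfolding internally_disjoint_def by blast
  qed
  then have "is_subdivision E (n, es) (\<lambda>i. bs ! i) (\<lambda>k. Ps ! k)"
    unfolding is_subdivision_def Let_def fst_conv snd_conv branch
    using bs(1,2) path inner by (auto simp: inj_on_def nth_eq_iff_index_eq path_between_def)
  moreover have "subdivision_edges (n, es) (\<lambda>k. Ps ! k) = (\<Union>X\<in>set Ps. path_edges X)"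
    unfolding subdivision_edges_def using Ps by (auto simp: set_conv_nth)
  ultimately show ?thesis unfolding covered_by_subdivision_def using H F
    by (intro bexI[OF _ H] exI[of _ "\<lambda>i. bs ! i"] exI[of _ "\<lambda>k. Ps ! k"]) simp
qed

definition theta :: "'a set set \<Rightarrow> 'a \<Rightarrow> 'a \<Rightarrow> 'a list \<Rightarrow> 'a list \<Rightarrow> 'a list \<Rightarrow> bool" where
  "theta E p q A B R \<longleftrightarrow>
     path_between E p q A \<and> path_between E p q B \<and> path_between E p q R \<and>
     openly_disjoint A B \<and> openly_disjoint A R \<and> openly_disjoint B R"

definition theta_ear :: "'a set set \<Rightarrow> 'a list \<Rightarrow> 'a list \<Rightarrow> 'a list \<Rightarrow> 'a list \<Rightarrow> bool" where
  "theta_ear E A B R T \<longleftrightarrow> is_path E T \<and> length T \<ge> 2 \<and> hd T \<noteq> last T \<and>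
     hd T \<in> set A \<union> set B \<union> set R \<and> last T \<in> set A \<union> set B \<union> set R \<and>
     internal T \<inter> (set A \<union> set B \<union> set R) = {} \<and>
     path_edges T \<inter> (path_edges A \<union> path_edges B \<union> path_edges R) = {}"

lemma theta_sym:
  "theta E p q A B R \<Longrightarrow> theta E p q B A R"
  "theta E p q A B R \<Longrightarrow> theta E p q A R B"
  "theta E p q A B R \<Longrightarrow> theta E q p (rev A) (rev B) (rev R)"
  unfolding theta_def by (auto simp: openly_disjoint_sym openly_disjoint_rev path_between_rev)

lemma theta_ear_sym:
  "theta_ear E A B R T \<Longrightarrow> theta_ear E B A R T"
  "theta_ear E A B R T \<Longrightarrow> theta_ear E A R B T"
  "theta_ear E A B R T \<Longrightarrow> theta_ear E (rev A) (rev B) (rev R) T"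
  "theta_ear E A B R T \<Longrightarrow> theta_ear E A B R (rev T)"
  unfolding theta_ear_def by (auto simp: hd_rev last_rev)

lemma theta_ear_path: "theta_ear E A B R T \<Longrightarrow> path_between E (hd T) (last T) T"
  unfolding theta_ear_def path_between_def by blast

lemma theta_ear_internally_disjoint:
  assumes "theta E p q A B R" "theta_ear E A B R T"
  shows "sorted_wrt internally_disjoint [A, B, R, T]"
proof -
  have "openly_disjoint A B" "openly_disjoint A R" "openly_disjoint B R"
    using assms(1) unfolding theta_def by blast+
  moreover have "internally_disjoint X T"
    if "internal T \<inter> set X = {}" "path_edges T \<inter> path_edges X = {}" for X
    using that internal_subset[of X] unfolding internally_disjoint_def by blast
  moreover have "internal T \<inter> set X = {}" "path_edges T \<inter> path_edges X = {}" if "X \<in> {A, B, R}" for X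
    using assms(2) that unfolding theta_ear_def by auto
  ultimately show ?thesis by (simp add: openly_disjoint_internally_disjoint)
qed

lemma theta_vertex_cases:
  assumes "theta E p q A B R" "v \<in> set A \<union> set B \<union> set R"
  shows "v = p \<or> v = q \<or> v \<in> internal A \<or> v \<in> internal B \<or> v \<in> internal R"
proof -
  have "path_between E p q A" "path_between E p q B" "path_between E p q R"
    using assms(1) unfolding theta_def by blast+
  then have "set A = insert p (insert q (internal A))" "set B = insert p (insert q (internal B))"
    "set R = insert p (insert q (internal R))"
    using set_eq_ends_internal unfolding path_between_def by metis+
  then show ?thesis using assms(2) by auto
qed

lemma theta_poles_not_internal:
  assumes "theta E p q A B R" "theta_ear E A B R T"
  shows "p \<notin> internal A \<union> internal B \<union> internal R \<union> internal T"
    "q \<notin> internal A \<union> internal B \<union> internal R \<union> internal T"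
proof -
  have paths: "path_between E p q A" "path_between E p q B" "path_between E p q R"
    using assms(1) unfolding theta_def by blast+
  have "internal T \<inter> set A = {}" using assms(2) unfolding theta_ear_def by blast
  then have "p \<notin> internal T" "q \<notin> internal T" using path_between_ends(1,2)[OF paths(1)] by blast+
  then show "p \<notin> internal A \<union> internal B \<union> internal R \<union> internal T"
    "q \<notin> internal A \<union> internal B \<union> internal R \<union> internal T"
    using path_between_ends(3,4)[OF paths(1)] path_between_ends(3,4)[OF paths(2)]
      path_between_ends(3,4)[OF paths(3)] by blast+
qed

lemma theta_inner_vertex:
  assumes "theta E p q A B R" "v \<in> internal A"
  shows "v \<notin> internal B" "v \<notin> internal R" "v \<noteq> p" "v \<noteq> q"
proof -
  have A: "path_between E p q A" and "openly_disjoint A B" "openly_disjoint A R"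
    using assms(1) unfolding theta_def by blast+
  then show "v \<notin> internal B" "v \<notin> internal R"
    using assms(2) internal_subset[of B] internal_subset[of R] unfolding openly_disjoint_def by blast+
  show "v \<noteq> p" "v \<noteq> q" using assms(2) path_between_ends(3,4)[OF A] by blast+
qed

lemma theta_ear_K4:
  assumes th: "theta E p q A B R" and ea: "theta_ear E A B R T"
    and st: "hd T \<in> internal A" "last T \<in> internal B"
  shows "covered_by_subdivision E (path_edges A \<union> path_edges B \<union> path_edges R)"
proof -
  define s t where "s = hd T" and "t = last T"
  have paths: "path_between E p q A" "path_between E p q B" "path_between E p q R"
    using th unfolding theta_def by blast+
  obtain A1 A2 where A: "path_splits E A s A1 A2"
    using path_splits_ex[of E A s] paths(1) st(1) unfolding s_def path_between_def by blast
  obtain B1 B2 where B: "path_splits E B t B1 B2"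
    using path_splits_ex[of E B t] paths(2) st(2) unfolding t_def path_between_def by blast
  note A_facts = path_splits_facts[OF A] path_splits_between[OF paths(1) A]
  note B_facts = path_splits_facts[OF B] path_splits_between[OF paths(2) B]
  note A_parts = path_splits_parts[OF A] and B_parts = path_splits_parts[OF B]
  have s: "s \<notin> internal B" "s \<notin> internal R" "s \<noteq> p" "s \<noteq> q"
    using theta_inner_vertex[OF th] st(1) unfolding s_def by blast+
  have t: "t \<notin> internal A" "t \<notin> internal R" "t \<noteq> p" "t \<noteq> q"
    using theta_inner_vertex[OF theta_sym(1)[OF th]] st(2) unfolding t_def by blast+
  have "path_between E s t T" using theta_ear_path[OF ea] unfolding s_def t_def .
  note T = this path_between_ends(3,4)[OF this]
  have "s \<noteq> t" using st(1) t(1) unfolding s_def by blast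
  note poles = theta_poles_not_internal[OF th ea]
  note disj = theta_ear_internally_disjoint[OF th ea]
  show ?thesis
  proof (rule covered_by_subdivisionI[where bs = "[p, q, s, t]" and Ps = "[R, A1, B1, rev A2, rev B2, T]"])
    show "(4, [(0, 1), (0, 2), (0, 3), (1, 2), (1, 3), (2, 3)]) \<in> {mg_K2_4, mg_K4, mg_K3_221, mg_C4_2121}"
      by (simp add: mg_K4_def)
    show "distinct [p, q, s, t]" using path_between_ends(5)[OF paths(1)] s t \<open>s \<noteq> t\<close> by auto
    show "list_all2 (\<lambda>e X. path_between E ([p, q, s, t] ! fst e) ([p, q, s, t] ! snd e) X \<and>
        internal X \<inter> set [p, q, s, t] = {})
      [(0, 1), (0, 2), (0, 3), (1, 2), (1, 3), (2, 3)] [R, A1, B1, rev A2, rev B2, T]"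
      using paths A_facts A_parts B_facts B_parts s t T poles by (auto simp: path_between_rev)
    \<comment> \<open>split the family A, B, R, T at s and t; simp then reorders it by commutativity\<close>
    have "sorted_wrt internally_disjoint ([] @ A1 # A2 # [B, R, T])"
      using sorted_wrt_internally_disjoint_split[OF _ A, of "[]" "[B, R, T]"] disj by simp
    then have "sorted_wrt internally_disjoint ([A1, A2] @ B1 # B2 # [R, T])"
      using sorted_wrt_internally_disjoint_split[OF _ B, of "[A1, A2]" "[R, T]"] by simp
    then show "sorted_wrt internally_disjoint [R, A1, B1, rev A2, rev B2, T]"
      by (simp add: internally_disjoint_commute)
    show "path_edges A \<union> path_edges B \<union> path_edges R \<subseteq> (\<Union>X\<in>set [R, A1, B1, rev A2, rev B2, T]. path_edges X)"
      using path_splits_path_edges[OF A] path_splits_path_edges[OF B] by auto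
  qed simp_all
qed

lemma theta_ear_K2_4:
  assumes th: "theta E p q A B R" and ea: "theta_ear E A B R T" and st: "hd T = p" "last T = q"
  shows "covered_by_subdivision E (path_edges A \<union> path_edges B \<union> path_edges R)"
proof -
  have paths: "path_between E p q A" "path_between E p q B" "path_between E p q R"
    using th unfolding theta_def by blast+
  have "path_between E p q T" using theta_ear_path[OF ea] st by simp
  note T = this path_between_ends(3,4)[OF this]
  note poles = theta_poles_not_internal[OF th ea]
  show ?thesis
  proof (rule covered_by_subdivisionI[where bs = "[p, q]" and Ps = "[A, B, R, T]"])
    show "(2, [(0, 1), (0, 1), (0, 1), (0, 1)]) \<in> {mg_K2_4, mg_K4, mg_K3_221, mg_C4_2121}"
      by (simp add: mg_K2_4_def)
    show "distinct [p, q]" using path_between_ends(5)[OF paths(1)] by simp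
    show "list_all2 (\<lambda>e X. path_between E ([p, q] ! fst e) ([p, q] ! snd e) X \<and>
        internal X \<inter> set [p, q] = {}) [(0, 1), (0, 1), (0, 1), (0, 1)] [A, B, R, T]"
      using paths T poles by auto
    show "sorted_wrt internally_disjoint [A, B, R, T]" by (rule theta_ear_internally_disjoint[OF th ea])
  qed auto
qed

lemma theta_ear_K3_221:
  assumes th: "theta E p q A B R" and ea: "theta_ear E A B R T"
    and st: "hd T = p" "last T \<in> internal A"
  shows "covered_by_subdivision E (path_edges A \<union> path_edges B \<union> path_edges R)"
proof -
  define t where "t = last T"
  have paths: "path_between E p q A" "path_between E p q B" "path_between E p q R"
    using th unfolding theta_def by blast+
  obtain A1 A2 where A: "path_splits E A t A1 A2"
    using path_splits_ex[of E A t] paths(1) st(2) unfolding t_def path_between_def by blast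
  note A_facts = path_splits_facts[OF A] path_splits_between[OF paths(1) A]
  note A_parts = path_splits_parts[OF A]
  have t: "t \<notin> internal B" "t \<notin> internal R" "t \<noteq> p" "t \<noteq> q"
    using theta_inner_vertex[OF th] st(2) unfolding t_def by blast+
  have "path_between E p t T" using theta_ear_path[OF ea] st(1) unfolding t_def by simp
  note T = this path_between_ends(3,4)[OF this]
  note poles = theta_poles_not_internal[OF th ea]
  note disj = theta_ear_internally_disjoint[OF th ea]
  show ?thesis
  proof (rule covered_by_subdivisionI[where bs = "[q, p, t]" and Ps = "[rev B, rev R, A1, T, rev A2]"])
    show "(3, [(0, 1), (0, 1), (1, 2), (1, 2), (0, 2)]) \<in> {mg_K2_4, mg_K4, mg_K3_221, mg_C4_2121}"
      by (simp add: mg_K3_221_def)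
    show "distinct [q, p, t]" using path_between_ends(5)[OF paths(1)] t by auto
    show "list_all2 (\<lambda>e X. path_between E ([q, p, t] ! fst e) ([q, p, t] ! snd e) X \<and>
        internal X \<inter> set [q, p, t] = {})
      [(0, 1), (0, 1), (1, 2), (1, 2), (0, 2)] [rev B, rev R, A1, T, rev A2]"
      using paths A_facts A_parts t T poles by (auto simp: path_between_rev)
    have "sorted_wrt internally_disjoint ([] @ A1 # A2 # [B, R, T])"
      using sorted_wrt_internally_disjoint_split[OF _ A, of "[]" "[B, R, T]"] disj by simp
    then show "sorted_wrt internally_disjoint [rev B, rev R, A1, T, rev A2]"
      by (simp add: internally_disjoint_commute)
    show "path_edges A \<union> path_edges B \<union> path_edges R \<subseteq> (\<Union>X\<in>set [rev B, rev R, A1, T, rev A2]. path_edges X)"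
      using path_splits_path_edges[OF A] by auto
  qed simp_all
qed

lemma theta_ear_C4_2121:
  assumes th: "theta E p q A B R" and ea: "theta_ear E A B R T"
    and A: "path_splits E A (hd T) A1 A2" and st: "last T \<in> internal A2"
  shows "covered_by_subdivision E (path_edges A \<union> path_edges B \<union> path_edges R)"
proof -
  define s t where "s = hd T" and "t = last T"
  have paths: "path_between E p q A" "path_between E p q B" "path_between E p q R"
    using th unfolding theta_def by blast+
  note A = A[folded s_def]
  note A_facts = path_splits_facts[OF A] path_splits_between[OF paths(1) A]
  note A_parts = path_splits_parts[OF A]
  have A2_path: "path_between E s q A2" by (rule path_splits_between(2)[OF paths(1) A])
  obtain A21 A22 where A2: "path_splits E A2 t A21 A22"
    using path_splits_ex[of E A2 t] A2_path st unfolding t_def path_between_def by blast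
  note A2_facts = path_splits_facts[OF A2] path_splits_between[OF A2_path A2]
  note A2_parts = path_splits_parts[OF A2]
  have "s \<in> internal A" "t \<in> internal A" using path_splits_internal[OF A] st unfolding t_def by auto
  then have s: "s \<notin> internal B" "s \<notin> internal R" "s \<noteq> p" "s \<noteq> q"
    and t: "t \<notin> internal B" "t \<notin> internal R" "t \<noteq> p" "t \<noteq> q"
    using theta_inner_vertex[OF th] by blast+
  have "t \<notin> internal A1"
    using path_splits_internally_disjoint[OF A] st unfolding t_def internally_disjoint_def by blast
  have "path_between E s t T" using theta_ear_path[OF ea] unfolding s_def t_def .
  note T = this path_between_ends(3,4,5)[OF this]
  note poles = theta_poles_not_internal[OF th ea]
  note disj = theta_ear_internally_disjoint[OF th ea]
  show ?thesis
  proof (rule covered_by_subdivisionI[where bs = "[s, t, q, p]" and Ps = "[A21, T, A22, rev B, rev R, A1]"])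
    show "(4, [(0, 1), (0, 1), (1, 2), (2, 3), (2, 3), (3, 0)]) \<in> {mg_K2_4, mg_K4, mg_K3_221, mg_C4_2121}"
      by (simp add: mg_C4_2121_def)
    show "distinct [s, t, q, p]" using path_between_ends(5)[OF paths(1)] s t T(4) by auto
    show "list_all2 (\<lambda>e X. path_between E ([s, t, q, p] ! fst e) ([s, t, q, p] ! snd e) X \<and>
        internal X \<inter> set [s, t, q, p] = {})
      [(0, 1), (0, 1), (1, 2), (2, 3), (2, 3), (3, 0)] [A21, T, A22, rev B, rev R, A1]"
      using paths A_facts A_parts A2_facts A2_parts s t \<open>t \<notin> internal A1\<close> T poles
      by (auto simp: path_between_rev)
    have "sorted_wrt internally_disjoint ([] @ A1 # A2 # [B, R, T])"
      using sorted_wrt_internally_disjoint_split[OF _ A, of "[]" "[B, R, T]"] disj by simp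
    then have "sorted_wrt internally_disjoint ([A1] @ A21 # A22 # [B, R, T])"
      using sorted_wrt_internally_disjoint_split[OF _ A2, of "[A1]" "[B, R, T]"] by simp
    then show "sorted_wrt internally_disjoint [A21, T, A22, rev B, rev R, A1]"
      by (simp add: internally_disjoint_commute)
    show "path_edges A \<union> path_edges B \<union> path_edges R \<subseteq> (\<Union>X\<in>set [A21, T, A22, rev B, rev R, A1]. path_edges X)"
      using path_splits_path_edges[OF A] path_splits_path_edges[OF A2] by auto
  qed simp_all
qed

lemma theta_wlog_first_branch:
  assumes th: "theta E p q A B R" and ea: "theta_ear E A B R T"
    and v: "v \<in> internal A \<union> internal B \<union> internal R"
  obtains A' B' R' where "theta E p q A' B' R'" "theta_ear E A' B' R' T" "v \<in> internal A'"
    "internal A' \<union> internal B' \<union> internal R' = internal A \<union> internal B \<union> internal R"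
    "path_edges A' \<union> path_edges B' \<union> path_edges R' = path_edges A \<union> path_edges B \<union> path_edges R"
proof -
  consider "v \<in> internal A" | "v \<in> internal B" | "v \<in> internal R" using v by blast
  then show thesis
  proof cases
    case 1
    then show thesis using that th ea by blast
  next
    case 2
    then show thesis using that[OF theta_sym(1)[OF th] theta_ear_sym(1)[OF ea]] by (simp add: Un_ac)
  next
    case 3
    then show thesis
      using that[OF theta_sym(1)[OF theta_sym(2)[OF th]] theta_ear_sym(1)[OF theta_ear_sym(2)[OF ea]]]
      by (simp add: Un_ac)
  qed
qed

lemma theta_ear_same_branch:
  assumes th: "theta E p q A B R" and ea: "theta_ear E A B R T"
    and st: "hd T \<in> internal A" "last T \<in> internal A"
  shows "covered_by_subdivision E (path_edges A \<union> path_edges B \<union> path_edges R)"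
proof -
  have "is_path E A" using th unfolding theta_def path_between_def by blast
  then obtain A1 A2 where A: "path_splits E A (hd T) A1 A2" using path_splits_ex st(1) by metis
  have "hd T \<noteq> last T" using ea unfolding theta_ear_def by blast
  then have "last T \<in> internal A1 \<or> last T \<in> internal A2" using path_splits_internal[OF A] st(2) by auto
  then show ?thesis
  proof
    assume "last T \<in> internal A1"
    then have "covered_by_subdivision E (path_edges (rev A) \<union> path_edges (rev B) \<union> path_edges (rev R))"
      by (intro theta_ear_C4_2121[OF theta_sym(3)[OF th] theta_ear_sym(3)[OF ea] path_splits_rev[OF A]])
        simp
    then show ?thesis by simp
  qed (rule theta_ear_C4_2121[OF th ea A])
qed

lemma theta_ear_inner_inner:
  assumes th: "theta E p q A B R" and ea: "theta_ear E A B R T"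
    and st: "hd T \<in> internal A \<union> internal B \<union> internal R" "last T \<in> internal A \<union> internal B \<union> internal R"
  shows "covered_by_subdivision E (path_edges A \<union> path_edges B \<union> path_edges R)"
proof -
  obtain A' B' R' where th': "theta E p q A' B' R'" and ea': "theta_ear E A' B' R' T"
    and s: "hd T \<in> internal A'"
    and inner: "internal A' \<union> internal B' \<union> internal R' = internal A \<union> internal B \<union> internal R"
    and edges: "path_edges A' \<union> path_edges B' \<union> path_edges R' = path_edges A \<union> path_edges B \<union> path_edges R"
    using theta_wlog_first_branch[OF th ea st(1)] .
  have "last T \<in> internal A' \<union> internal B' \<union> internal R'" using st(2) inner by simp
  then have "covered_by_subdivision E (path_edges A' \<union> path_edges B' \<union> path_edges R')"
  proof (elim UnE)
    assume "last T \<in> internal A'"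
    then show ?thesis using theta_ear_same_branch[OF th' ea' s] by blast
  next
    assume "last T \<in> internal B'"
    then show ?thesis using theta_ear_K4[OF th' ea' s] by blast
  next
    assume "last T \<in> internal R'"
    then show ?thesis using theta_ear_K4[OF theta_sym(2)[OF th'] theta_ear_sym(2)[OF ea'] s]
      by (simp add: Un_ac)
  qed
  then show ?thesis using edges by simp
qed

lemma theta_ear_pole_inner:
  assumes th: "theta E p q A B R" and ea: "theta_ear E A B R T"
    and st: "hd T \<in> {p, q}" "last T \<in> internal A \<union> internal B \<union> internal R"
  shows "covered_by_subdivision E (path_edges A \<union> path_edges B \<union> path_edges R)"
proof -
  have pole_p: "covered_by_subdivision E (path_edges A \<union> path_edges B \<union> path_edges R)"
    if th: "theta E p q A B R" and ea: "theta_ear E A B R T"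
      and st: "hd T = p" "last T \<in> internal A \<union> internal B \<union> internal R" for p q A B R
  proof -
    obtain A' B' R' where "theta E p q A' B' R'" "theta_ear E A' B' R' T" "last T \<in> internal A'"
      and edges: "path_edges A' \<union> path_edges B' \<union> path_edges R' = path_edges A \<union> path_edges B \<union> path_edges R"
      using theta_wlog_first_branch[OF th ea st(2)] .
    then show ?thesis using theta_ear_K3_221 st(1) edges by metis
  qed
  consider "hd T = p" | "hd T = q" using st(1) by blast
  then show ?thesis
  proof cases
    case 1
    then show ?thesis using pole_p[OF th ea _ st(2)] by simp
  next
    case 2
    then have "covered_by_subdivision E (path_edges (rev A) \<union> path_edges (rev B) \<union> path_edges (rev R))"
      by (intro pole_p[OF theta_sym(3)[OF th] theta_ear_sym(3)[OF ea]]) (use st(2) in simp_all)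
    then show ?thesis by simp
  qed
qed

lemma theta_ear_covered:
  assumes th: "theta E p q A B R" and ea: "theta_ear E A B R T"
  shows "covered_by_subdivision E (path_edges A \<union> path_edges B \<union> path_edges R)"
proof -
  have ends: "hd T \<in> {p, q} \<or> hd T \<in> internal A \<union> internal B \<union> internal R"
    "last T \<in> {p, q} \<or> last T \<in> internal A \<union> internal B \<union> internal R"
    using theta_vertex_cases[OF th] ea unfolding theta_ear_def by blast+
  have ear_rev: "theta_ear E A B R (rev T)" by (rule theta_ear_sym(4)[OF ea])
  have "hd T \<noteq> last T" using ea unfolding theta_ear_def by blast
  show ?thesis
  proof (cases "hd T \<in> {p, q}"; cases "last T \<in> {p, q}")
    assume "hd T \<in> {p, q}" "last T \<in> {p, q}"
    then consider "hd T = p" "last T = q" | "hd (rev T) = p" "last (rev T) = q"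
      using \<open>hd T \<noteq> last T\<close> by (auto simp: hd_rev last_rev)
    then show ?thesis using theta_ear_K2_4[OF th ea] theta_ear_K2_4[OF th ear_rev] by cases
  next
    assume "hd T \<in> {p, q}" "last T \<notin> {p, q}"
    then show ?thesis using theta_ear_pole_inner[OF th ea] ends(2) by blast
  next
    assume "hd T \<notin> {p, q}" "last T \<in> {p, q}"
    then show ?thesis using theta_ear_pole_inner[OF th ear_rev] ends(1) by (simp add: hd_rev last_rev)
  next
    assume "hd T \<notin> {p, q}" "last T \<notin> {p, q}"
    then show ?thesis using theta_ear_inner_inner[OF th ea] ends by blast
  qed
qed

section \<open>Theta graphs in (3,2)-critical graphs\<close>

lemma openly_disjoint_common_vertices:
  assumes "path_between E p q X" "openly_disjoint X Y" shows "set X \<inter> set Y \<subseteq> {p, q}"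
  using assms set_eq_ends_internal[of X] unfolding path_between_def openly_disjoint_def by auto

text \<open>Colour B and R alternately from p (they agree at q since their lengths have equal parity),
  and the two halves of A minus a alternately from p and towards q respectively.\<close>

lemma theta_delete_edge_bicolourable:
  assumes th: "theta E p q A B R" and ev: "even (length B + length R)" and a: "a \<in> path_edges A"
  shows "\<exists>c. bicolouring c (path_edges A - {a} \<union> path_edges B \<union> path_edges R)"
proof -
  have paths: "path_between E p q A" "path_between E p q B" "path_between E p q R"
    and disj: "openly_disjoint A B" "openly_disjoint A R" "openly_disjoint B R"
    using th unfolding theta_def by blast+
  have BR: "set B \<inter> set R \<subseteq> {p, q}" and AB: "set A \<inter> (set B \<union> set R) \<subseteq> {p, q}"
    using openly_disjoint_common_vertices[OF paths(2) disj(3)]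
      openly_disjoint_common_vertices[OF paths(1) disj(1)]
      openly_disjoint_common_vertices[OF paths(1) disj(2)] by blast+
  have "distinct A" using paths(1) unfolding path_between_def is_path_def by blast
  then obtain A1 A2 where A: "A = A1 @ A2" "A1 \<noteq> []" "A2 \<noteq> []"
    and edges_A: "path_edges A - {a} \<subseteq> path_edges A1 \<union> path_edges A2"
    and A12: "distinct A1" "distinct A2" "set A1 \<inter> set A2 = {}"
    using distinct_path_split_at_edge[OF _ a] by blast
  have "hd A1 = p" "last A2 = q" using paths(1) A unfolding path_between_def by auto
  then have "p \<in> set A1" "q \<in> set A2" using A(2,3) hd_in_set last_in_set by metis+
  then have p: "p \<in> set A1" "p \<notin> set A2" and q: "q \<in> set A2" "q \<notin> set A1"
    using A12(3) by blast+
  obtain cB where cB: "cB p" "cB q = odd (length B)" "bicolouring cB (path_edges B)"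
    using path_bicolouring[of B True] paths(2) unfolding path_between_def is_path_def by auto
  obtain cR where cR: "cR p" "cR q = odd (length R)" "bicolouring cR (path_edges R)"
    using path_bicolouring[of R True] paths(3) unfolding path_between_def is_path_def by auto
  obtain cA1 where cA1: "cA1 p" "bicolouring cA1 (path_edges A1)"
    using path_bicolouring[of A1 True] A12(1) A(2) \<open>hd A1 = p\<close> by auto
  obtain cA2 where cA2: "cA2 q = cB q" "bicolouring cA2 (path_edges A2)"
    using path_bicolouring[of A2 "cB q = odd (length A2)"] A12(2) A(3) \<open>last A2 = q\<close> by auto
  have "cB q = cR q" using cB(2) cR(2) ev by simp
  define c where "c v = (if v \<in> set B then cB v else if v \<in> set R then cR v
    else if v \<in> set A1 then cA1 v else cA2 v)" for v
  have "c v = cB v" if "v \<in> set B" for v using that unfolding c_def by simp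
  moreover have "c v = cR v" if "v \<in> set R" for v
    using that BR cB(1) cR(1) \<open>cB q = cR q\<close> unfolding c_def by auto
  moreover have "c v = cA1 v" if "v \<in> set A1" for v
    using that AB A(1) q(2) cB(1) cR(1) cA1(1) unfolding c_def by auto
  moreover have "c v = cA2 v" if "v \<in> set A2" for v
    using that AB A(1) p(2) A12(3) cA2(1) \<open>cB q = cR q\<close> q(1) unfolding c_def by auto
  ultimately have "bicolouring c (path_edges B)" "bicolouring c (path_edges R)"
    "bicolouring c (path_edges A1)" "bicolouring c (path_edges A2)"
    using bicolouring_path_cong cB(3) cR(3) cA1(2) cA2(2) by metis+
  then have "bicolouring c (path_edges A1 \<union> path_edges A2 \<union> path_edges B \<union> path_edges R)"
    by (intro bicolouring_Un)
  moreover have "path_edges A - {a} \<union> path_edges B \<union> path_edges R \<subseteq>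
      path_edges A1 \<union> path_edges A2 \<union> path_edges B \<union> path_edges R"
    using edges_A by blast
  ultimately show ?thesis using bicolouring_subset by blast
qed

lemma theta_cycle:
  assumes "theta E p q A B R"
  obtains zs where "is_cycle E zs" "cycle_edges zs = path_edges A \<union> path_edges B"
    "length zs + 2 = length A + length B"
proof -
  have A: "path_between E p q A" and B: "path_between E p q B" and AB: "openly_disjoint A B"
    using assms unfolding theta_def by blast+
  have "set A \<inter> set B = {p, q}"
    using openly_disjoint_common_vertices[OF A AB] path_between_ends(1,2)[OF A] path_between_ends(1,2)[OF B]
    by blast
  moreover have "length A + length B \<ge> 5"
  proof (rule ccontr)
    assume "\<not> length A + length B \<ge> 5"
    then have "length A = 2" "length B = 2" using A B unfolding path_between_def by auto
    then have "path_edges A = {{p, q}}" "path_edges B = {{p, q}}"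
      using A B unfolding path_between_def
      by (metis (no_types, lifting) One_nat_def Suc_length_conv length_0_conv numeral_2_eq_2
          path_edges_Cons2 path_edges_single last_ConsL last_ConsR list.sel(1) list.discI)+
    then show False using AB unfolding openly_disjoint_def by simp
  qed
  ultimately show thesis
    using cycle_of_paths[of E A B] that A B path_between_ends(5)[OF A] unfolding path_between_def by auto
qed

lemma theta_of_cycle_and_ear:
  assumes xs: "is_cycle E xs"
    and R: "is_path E R" "length R \<ge> 2" "hd R \<in> set xs" "last R \<in> set xs" "hd R \<noteq> last R"
      "internal R \<inter> set xs = {}" "path_edges R \<inter> cycle_edges xs = {}"
  obtains A B where "theta E (hd R) (last R) A B R" "path_edges A \<union> path_edges B = cycle_edges xs"
    "length A + length B = length xs + 2"
proof -
  define p q where "p = hd R" and "q = last R"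
  obtain A B where A: "path_between E p q A" and B: "path_between E p q B"
    and meet: "set A \<inter> set B = {p, q}" "set A \<union> set B = set xs"
    and edges: "path_edges A \<union> path_edges B = cycle_edges xs"
    and lengths: "length A + length B = length xs + 2"
    using cycle_split_at[OF xs R(3,4,5)] unfolding p_def q_def path_between_def by metis
  have Rpq: "path_between E p q R" using R(1,2) unfolding p_def q_def path_between_def by blast
  have setR: "set R = insert p (insert q (internal R))"
    using set_eq_ends_internal[OF R(2)] unfolding p_def q_def .
  have "openly_disjoint X R" if "path_between E p q X" "set X \<subseteq> set xs" "path_edges X \<subseteq> cycle_edges xs"
    for X
  proof -
    have "internal R \<inter> set X = {}" "path_edges X \<inter> path_edges R = {}" using that(2,3) R(6,7) by blast+
    moreover have "internal X \<inter> set R = {}"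
      using setR path_between_ends(3,4)[OF that(1)] calculation(1) internal_subset[of X] by auto
    ultimately show ?thesis unfolding openly_disjoint_def by blast
  qed
  then have AR: "openly_disjoint A R" and BR: "openly_disjoint B R"
    using A B meet(2) edges by blast+
  have "set A \<inter> set B \<subseteq> {p, q}" using meet(1) by simp
  then have "internal A \<inter> set B = {}" "internal B \<inter> set A = {}"
    using path_between_ends(3,4)[OF A] path_between_ends(3,4)[OF B] internal_subset[of A]
      internal_subset[of B] by blast+
  moreover have "path_edges A \<inter> path_edges B = {}"
  proof (rule ccontr)
    assume "path_edges A \<inter> path_edges B \<noteq> {}"
    then have "length A = 2 \<and> length B = 2"
      using shared_edge_single_edge_paths[OF calculation] by blast
    then show False using lengths xs by (simp add: is_cycle_def)
  qed
  ultimately have "openly_disjoint A B" unfolding openly_disjoint_def by blast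
  then have "theta E p q A B R" using A B Rpq AR BR unfolding theta_def by blast
  then show thesis using that edges lengths unfolding p_def q_def by blast
qed

text \<open>An ear of an odd cycle splits it into two paths of opposite parity; the ear closes an odd
  cycle with one of them.\<close>

lemma odd_cycle_ear_theta:
  assumes xs: "is_cycle E xs" "odd (length xs)"
    and R: "is_path E R" "length R \<ge> 2" "hd R \<in> set xs" "last R \<in> set xs" "hd R \<noteq> last R"
      "internal R \<inter> set xs = {}" "path_edges R \<inter> cycle_edges xs = {}"
  obtains p q A B zs where "theta E p q A B R" "cycle_edges xs = path_edges A \<union> path_edges B"
    "is_cycle E zs" "odd (length zs)" "cycle_edges zs = path_edges A \<union> path_edges R"
    "even (length B + length R)"
proof -
  obtain A B where th: "theta E (hd R) (last R) A B R" and edges: "path_edges A \<union> path_edges B = cycle_edges xs"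
    and lengths: "length A + length B = length xs + 2"
    using theta_of_cycle_and_ear[OF xs(1) R] .
  obtain zA where zA: "is_cycle E zA" "cycle_edges zA = path_edges A \<union> path_edges R"
    "length zA + 2 = length A + length R"
    using theta_cycle[OF theta_sym(2)[OF th]] .
  obtain zB where zB: "is_cycle E zB" "cycle_edges zB = path_edges B \<union> path_edges R"
    "length zB + 2 = length B + length R"
    using theta_cycle[OF theta_sym(2)[OF theta_sym(1)[OF th]]] .
  have parity: "even (length zA) \<longleftrightarrow> even (length A + length R)"
    "even (length zB) \<longleftrightarrow> even (length B + length R)"
    "odd (length A + length B)"
    using arg_cong[OF zA(3), of even] arg_cong[OF zB(3), of even] arg_cong[OF lengths, of even] xs(2)
    by simp_all
  show thesis
  proof (cases "odd (length zA)")
    case True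
    then have "even (length B + length R)" using parity by auto
    then show thesis using that[OF th _ zA(1) True zA(2)] edges by blast
  next
    case False
    then have "odd (length zB)" "even (length A + length R)" using parity by auto
    then show thesis using that[OF theta_sym(1)[OF th] _ zB(1) _ zB(2)] edges by blast
  qed
qed

text \<open>The first edge b of B lies neither on the odd cycle A \<union> R nor on an odd cycle edge-disjoint
  from the theta graph, so its partner would have to lie on both.\<close>

lemma theta_meets_odd_cycles:
  assumes hit: "odd_cycles_hit_by_pairs E" and th: "theta E p q A B R"
    and zs: "is_cycle E zs" "odd (length zs)" "cycle_edges zs = path_edges A \<union> path_edges R"
    and D: "is_cycle E D" "odd (length D)"
  shows "cycle_edges D \<inter> (path_edges A \<union> path_edges B \<union> path_edges R) \<noteq> {}"
proof
  assume D_F: "cycle_edges D \<inter> (path_edges A \<union> path_edges B \<union> path_edges R) = {}"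
  have B: "path_between E p q B" and disj: "openly_disjoint A B" "openly_disjoint B R"
    using th unfolding theta_def by blast+
  define b where "b = {B ! 0, B ! 1}"
  have b: "b \<in> path_edges B" "b \<in> E"
    using path_edges_first B unfolding b_def path_between_def is_path_iff by blast+
  obtain f where f: "\<And>xs. is_cycle E xs \<Longrightarrow> odd (length xs) \<Longrightarrow> b \<in> cycle_edges xs \<or> f \<in> cycle_edges xs"
    using hit b(2) unfolding odd_cycles_hit_by_pairs_def by blast
  have "b \<notin> cycle_edges zs" using zs(3) b(1) disj unfolding openly_disjoint_def by blast
  then have "f \<in> path_edges A \<union> path_edges R" using f[OF zs(1,2)] zs(3) by blast
  moreover have "b \<notin> cycle_edges D" using D_F b(1) by blast
  then have "f \<in> cycle_edges D" using f[OF D] by blast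
  ultimately show False using D_F by blast
qed

text \<open>An odd cycle avoiding the first edge of A cannot lie inside the theta graph, which is
  bipartite without that edge, and it shares an edge, hence two vertices, with the theta graph.\<close>

lemma critical_theta_ear:
  assumes hit: "odd_cycles_hit_by_pairs E" and avoid: "odd_cycles_avoid_edges E"
    and th: "theta E p q A B R"
    and zs: "is_cycle E zs" "odd (length zs)" "cycle_edges zs = path_edges A \<union> path_edges R"
    and ev: "even (length B + length R)"
  obtains T where "theta_ear E A B R T"
proof -
  have A: "path_between E p q A" using th unfolding theta_def by blast
  define a where "a = {A ! 0, A ! 1}"
  have a: "a \<in> path_edges A" "a \<in> E"
    using path_edges_first A unfolding a_def path_between_def is_path_iff by blast+
  obtain D where D: "is_cycle E D" "odd (length D)" "a \<notin> cycle_edges D"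
    using avoid a(2) unfolding odd_cycles_avoid_edges_def by blast
  define F S where "F = path_edges A \<union> path_edges B \<union> path_edges R" and "S = set A \<union> set B \<union> set R"
  have FS: "e \<subseteq> S" if "e \<in> F" for e
    using that path_edges_subset_set unfolding F_def S_def by blast
  have "\<not> cycle_edges D \<subseteq> F"
  proof
    assume "cycle_edges D \<subseteq> F"
    then have "cycle_edges D \<subseteq> path_edges A - {a} \<union> path_edges B \<union> path_edges R"
      using D(3) unfolding F_def by blast
    then show False
      using theta_delete_edge_bicolourable[OF th ev a(1)] odd_cycle_not_bicolourable[OF D(1,2)]
        bicolouring_subset by metis
  qed
  then obtain g where g: "g \<in> cycle_edges D" "g \<notin> F" by blast
  obtain e where "e \<in> cycle_edges D" "e \<in> F"
    using theta_meets_odd_cycles[OF hit th zs D(1,2)] unfolding F_def by blast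
  then obtain u v where "e = {u, v}" "u \<noteq> v" "u \<in> set D" "v \<in> set D"
    using cycle_edges_elem[OF D(1)] by blast
  then have uv: "u \<in> S" "v \<in> S" "u \<in> set D" "v \<in> set D" "u \<noteq> v"
    using FS[OF \<open>e \<in> F\<close>] by blast+
  obtain T where "is_path E T" "length T \<ge> 2" "hd T \<in> S" "last T \<in> S"
    "hd T \<noteq> last T" "internal T \<inter> S = {}" "path_edges T \<inter> F = {}"
    using cycle_ear[OF D(1) FS g uv] .
  then show thesis using that unfolding theta_ear_def S_def F_def by blast
qed

lemma odd_cycles_hit_by_pairs_not_disjoint:
  assumes hit: "odd_cycles_hit_by_pairs E"
    and C: "C1 \<in> odd_cycles E" "C2 \<in> odd_cycles E" "C3 \<in> odd_cycles E"
  shows "C1 \<inter> C2 \<noteq> {} \<or> C1 \<inter> C3 \<noteq> {} \<or> C2 \<inter> C3 \<noteq> {}"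
proof -
  obtain x1 where x1: "is_cycle E x1" "C1 = cycle_edges x1" using C(1) unfolding odd_cycles_def by blast
  then obtain e where e: "e \<in> C1" unfolding cycle_edges_def is_cycle_def by force
  then have "e \<in> E" using x1 cycle_edges_subset by blast
  then obtain f where f: "\<And>C. C \<in> odd_cycles E \<Longrightarrow> e \<in> C \<or> f \<in> C"
    using hit unfolding odd_cycles_hit_by_pairs_def odd_cycles_def by blast
  show ?thesis using f[OF C(2)] f[OF C(3)] e by blast
qed

text \<open>Among three odd cycles two share an edge, and one of these two contains an ear of the other.\<close>

lemma odd_cycle_with_ear:
  assumes hit: "odd_cycles_hit_by_pairs E" and three: "card (odd_cycles E) \<ge> 3"
  obtains xs R where "is_cycle E xs" "odd (length xs)"
    "is_path E R" "length R \<ge> 2" "hd R \<in> set xs" "last R \<in> set xs" "hd R \<noteq> last R"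
    "internal R \<inter> set xs = {}" "path_edges R \<inter> cycle_edges xs = {}"
proof -
  obtain S where S: "S \<subseteq> odd_cycles E" "card S = 3" using obtain_subset_with_card_n[OF three] by blast
  then obtain C1 C2 C3 where "S = {C1, C2, C3}" "C1 \<noteq> C2" "C2 \<noteq> C3" "C1 \<noteq> C3"
    unfolding card_3_iff by blast
  moreover have "C1 \<in> odd_cycles E" "C2 \<in> odd_cycles E" "C3 \<in> odd_cycles E"
    using S(1) calculation(1) by blast+
  ultimately obtain C C' where "C \<in> odd_cycles E" "C' \<in> odd_cycles E" "C \<noteq> C'" "C \<inter> C' \<noteq> {}"
    using odd_cycles_hit_by_pairs_not_disjoint[OF hit] by metis
  then obtain xs ys e where xs: "is_cycle E xs" "odd (length xs)" and ys: "is_cycle E ys" "odd (length ys)"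
    and edges: "cycle_edges xs \<noteq> cycle_edges ys" "e \<in> cycle_edges xs" "e \<in> cycle_edges ys"
    unfolding odd_cycles_def by blast
  obtain u v where uv: "e = {u, v}" "u \<noteq> v" using cycle_edges_elem[OF xs(1) edges(2)] by blast
  have shared: "u \<in> set xs" "v \<in> set xs" "u \<in> set ys" "v \<in> set ys"
    using cycle_edges_subset_set edges(2,3) uv(1) by blast+
  have ear: "\<exists>R. is_path E R \<and> length R \<ge> 2 \<and> hd R \<in> set xs \<and> last R \<in> set xs \<and> hd R \<noteq> last R \<and>
      internal R \<inter> set xs = {} \<and> path_edges R \<inter> cycle_edges xs = {}"
    if "is_cycle E xs" "is_cycle E ys" "g \<in> cycle_edges ys" "g \<notin> cycle_edges xs"
      "u \<in> set xs" "v \<in> set xs" "u \<in> set ys" "v \<in> set ys" for xs ys g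
    using cycle_ear[OF that(2) _ that(3,4) that(5-8) uv(2)] cycle_edges_subset_set by metis
  show thesis
  proof (cases "cycle_edges ys \<subseteq> cycle_edges xs")
    case True
    then obtain g where "g \<in> cycle_edges xs" "g \<notin> cycle_edges ys" using edges(1) by blast
    then show thesis using that[OF ys] ear[OF ys(1) xs(1)] shared by blast
  next
    case False
    then obtain g where "g \<in> cycle_edges ys" "g \<notin> cycle_edges xs" by blast
    then show thesis using that[OF xs] ear[OF xs(1) ys(1)] shared by blast
  qed
qed

lemma card_odd_cycles_subset_ge_2:
  assumes "finite E" and xs: "is_cycle E xs" "odd (length xs)" and zs: "is_cycle E zs" "odd (length zs)"
    and "cycle_edges xs \<noteq> cycle_edges zs" "cycle_edges xs \<subseteq> F" "cycle_edges zs \<subseteq> F"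
  shows "card {C \<in> odd_cycles E. C \<subseteq> F} \<ge> 2"
proof -
  have "{C \<in> odd_cycles E. C \<subseteq> F} \<subseteq> Pow E"
    using cycle_edges_subset unfolding odd_cycles_def by blast
  then have "finite {C \<in> odd_cycles E. C \<subseteq> F}"
    using \<open>finite E\<close> by (meson finite_Pow_iff finite_subset)
  moreover have "{cycle_edges xs, cycle_edges zs} \<subseteq> {C \<in> odd_cycles E. C \<subseteq> F}"
    using assms unfolding odd_cycles_def by blast
  ultimately have "card {cycle_edges xs, cycle_edges zs} \<le> card {C \<in> odd_cycles E. C \<subseteq> F}"
    by (rule card_mono)
  then show ?thesis using assms(6) by simp
qed

theorem proposition2p7:
  fixes V :: "'a set" and E :: "'a set set"
  assumes "simple_graph V E"
    and "critical_3_2 V E"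
    and "card (odd_cycles E) \<ge> 3"
  shows "\<exists>H \<in> {mg_K2_4, mg_K4, mg_K3_221, mg_C4_2121}. \<exists>f P.
           is_subdivision E H f P \<and>
           card {C \<in> odd_cycles E. C \<subseteq> subdivision_edges H P} \<ge> 2"
proof -
  have hit: "odd_cycles_hit_by_pairs E" and avoid: "odd_cycles_avoid_edges E"
    using critical_3_2_odd_cycles_hit_by_pairs critical_3_2_odd_cycles_avoid_edges assms(1,2) by blast+
  obtain xs R where xs: "is_cycle E xs" "odd (length xs)"
    and R: "is_path E R" "length R \<ge> 2" "hd R \<in> set xs" "last R \<in> set xs" "hd R \<noteq> last R"
      "internal R \<inter> set xs = {}" "path_edges R \<inter> cycle_edges xs = {}"
    using odd_cycle_with_ear[OF hit assms(3)] .
  obtain p q A B zs where th: "theta E p q A B R" and xs_AB: "cycle_edges xs = path_edges A \<union> path_edges B"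
    and zs: "is_cycle E zs" "odd (length zs)" "cycle_edges zs = path_edges A \<union> path_edges R"
    and ev: "even (length B + length R)"
    using odd_cycle_ear_theta[OF xs R] .
  obtain T where "theta_ear E A B R T" using critical_theta_ear[OF hit avoid th zs ev] .
  then obtain H f P where H: "H \<in> {mg_K2_4, mg_K4, mg_K3_221, mg_C4_2121}" "is_subdivision E H f P"
    and covers: "path_edges A \<union> path_edges B \<union> path_edges R \<subseteq> subdivision_edges H P"
    using theta_ear_covered[OF th] unfolding covered_by_subdivision_def by blast
  have "{R ! 0, R ! 1} \<in> cycle_edges zs" "{R ! 0, R ! 1} \<notin> cycle_edges xs"
    using zs(3) R(7) path_edges_first[OF R(2)] by blast+
  then have "cycle_edges zs \<noteq> cycle_edges xs" by blast
  then have "card {C \<in> odd_cycles E. C \<subseteq> subdivision_edges H P} \<ge> 2"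
    using card_odd_cycles_subset_ge_2[OF simple_graph_finite[OF assms(1)] xs zs(1,2)] covers xs_AB zs(3)
    by auto
  then show ?thesis using H by blast
qed

end
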